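(* Let $n\ge0$ and let $H_n$ be the pyrene system with $n$ pyrene fragments. Then $$Af(H_n,x)=x^{n}\sum_{l=0}^{2n}\sum_{i=\lceil\frac{l+2n}{4}\rceil}^{n}\sum_{j=\lceil\frac{l}{2}\rceil}^{l}(-1)^{n-i}2^{2i-n}\binom{i}{2i-n}\binom{2i-n}{j}\binom{j}{l-j}x^{l}.$$
   Context: Pyrene system: draw the hexagonal lattice so that every hexagon has two vertical sides; horizontally adjacent hexagons then share a vertical edge. For $n\ge1$, $H_n$ is the hexagonal system (the plane graph formed by the vertices and edges of the following $4n$ hexagons) consisting of a horizontal linear row of $2n$ hexagons $h_{1,1},h_{1,2},\dots,h_{n,1},h_{n,2}$, consecutive ones sharing a vertical edge, together with, for each $i$, a hexagon $s_{i,1}$ directly above and a hexagon $s_{i,2}$ directly below the common edge of $h_{i,1}$ and $h_{i,2}$ (each sharing an edge with both $h_{i,1}$ and $h_{i,2}$). $H_0$ is the null graph (anti-forcing polynomial $1$). For a perfect matching $M$ of $G$, an anti-forcing set of $M$ is a set $S\subseteq E(G)\setminus M$ such that $M$ is the unique perfect matching of $G-S$; the anti-forcing number $af(G,M)$ is the minimum size of an anti-forcing set of $M$. The anti-forcing polynomial is $Af(G,x)=\sum_{M\in\mathcal{M}(G)}x^{af(G,M)}$, where $\mathcal{M}(G)$ is the set of perfect matchings of $G$. Binomial coefficients $\binom{a}{b}$ are $0$ when $b<0$ or $b>a$. *)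

theory Defs
  imports "HOL-Computational_Algebra.Polynomial"
begin

definition perfect_matching :: "'a set \<Rightarrow> 'a set set \<Rightarrow> 'a set set \<Rightarrow> bool" where
  "perfect_matching V E M \<longleftrightarrow> M \<subseteq> E \<and> (\<forall>v\<in>V. \<exists>!e. e \<in> M \<and> v \<in> e)"

definition anti_forcing_set :: "'a set \<Rightarrow> 'a set set \<Rightarrow> 'a set set \<Rightarrow> 'a set set \<Rightarrow> bool" where
  "anti_forcing_set V E M S \<longleftrightarrow> S \<subseteq> E - M \<and>
     {M'. perfect_matching V (E - S) M'} = {M}"

definition anti_forcing_number :: "'a set \<Rightarrow> 'a set set \<Rightarrow> 'a set set \<Rightarrow> nat" where
  "anti_forcing_number V E M = (LEAST k. \<exists>S. anti_forcing_set V E M S \<and> finite S \<and> card S = k)"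

definition anti_forcing_poly :: "'a set \<Rightarrow> 'a set set \<Rightarrow> int poly" where
  "anti_forcing_poly V E = (\<Sum>M \<in> {M. perfect_matching V E M}. monom 1 (anti_forcing_number V E M))"

text \<open>The hexagonal lattice with vertical hexagon sides is drawn as a brick wall
on integer points: the hexagon with lower-left corner (x,y) (x+y even) has vertices
(x,y),(x+1,y),(x+2,y),(x,y+1),(x+1,y+1),(x+2,y+1), vertical sides at x and x+2.\<close>

definition hexagon :: "int \<times> int \<Rightarrow> (int \<times> int) set set" where
  "hexagon p = (case p of (x, y) \<Rightarrow>
     {{(x,y),(x+1,y)}, {(x+1,y),(x+2,y)}, {(x+2,y),(x+2,y+1)},
      {(x+1,y+1),(x+2,y+1)}, {(x,y+1),(x+1,y+1)}, {(x,y),(x,y+1)}})"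

text \<open>Hexagons of H_n (i = 0..n-1 indexes the fragments): h_{i,1} at (4i,0),
h_{i,2} at (4i+2,0) (sharing the vertical edge at x = 4i+2), s_{i,1} at (4i+1,1)
directly above that edge and s_{i,2} at (4i+1,-1) directly below it.\<close>
definition pyrene_hexagons :: "nat \<Rightarrow> (int \<times> int) set" where
  "pyrene_hexagons n = (\<Union>i\<in>{..<n}.
     {(4 * int i, 0), (4 * int i + 2, 0), (4 * int i + 1, 1), (4 * int i + 1, -1)})"

definition pyrene_edges :: "nat \<Rightarrow> (int \<times> int) set set" where
  "pyrene_edges n = \<Union> (hexagon ` pyrene_hexagons n)"

definition pyrene_vertices :: "nat \<Rightarrow> (int \<times> int) set" where
  "pyrene_vertices n = \<Union> (pyrene_edges n)"

end

(*
  Cut H_n along its n + 1 vertical edges at x = 4j (the rungs) into n fragments of 17 edges.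
  A perfect matching is then a word of local states, one per fragment: Flat a b, when the middle
  edge MR is unused and a, b record how the upper and lower hexagons are matched, or ToLeft /
  ToRight, when MR is used together with the two border edges on that side.  The only constraint
  is that ToRight is never followed by ToLeft, and the rungs used are determined by the word.

  The anti-forcing number of the matching of a word is the sum of local costs 3 (Flat a a),
  2 (Flat a (~a)) and 1 (leaning states).  An explicit set of that size forces the matching, and
  there are equally many further perfect matchings whose differences from the given one are
  pairwise disjoint; an anti-forcing set has to meet each of these differences.

  Summing x^cost over all words with a transfer matrix on the first letter gives
  p (n + 2) = 2x(1 + x + x^2) p (n + 1) - x^2 p n, solved by a Lucas sequence; expanding it and
  the powers of 1 + x + x^2 binomially yields the formula.
*)

theory Submission
  imports Defs "HOL-Library.Disjoint_Sets"
begin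

section \<open>Perfect matchings and anti-forcing sets\<close>

lemma Ex1_iff_singleton_Collect: "(\<exists>!x. P x) \<longleftrightarrow> (\<exists>x. {x. P x} = {x})"
proof
  assume "\<exists>!x. P x"
  then obtain x where "P x" "\<And>y. P y \<Longrightarrow> y = x"
    by blast
  then have "{x. P x} = {x}"
    by blast
  then show "\<exists>x. {x. P x} = {x}" ..
next
  assume "\<exists>x. {x. P x} = {x}"
  then obtain x where "{x. P x} = {x}" ..
  then show "\<exists>!x. P x"
    by (metis mem_Collect_eq singletonD singletonI)
qed

lemma perfect_matching_iff_singletons:
  "perfect_matching V E M \<longleftrightarrow> M \<subseteq> E \<and> (\<forall>v\<in>V. \<exists>e. {e \<in> M. v \<in> e} = {e})"
  unfolding perfect_matching_def Ex1_iff_singleton_Collect by simp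

lemma perfect_matching_edge_unique:
  "perfect_matching V E M \<Longrightarrow> v \<in> V \<Longrightarrow> e \<in> M \<Longrightarrow> e' \<in> M \<Longrightarrow>
    v \<in> e \<Longrightarrow> v \<in> e' \<Longrightarrow> e = e'"
  unfolding perfect_matching_def by blast

lemma perfect_matching_covers:
  "perfect_matching V E M \<Longrightarrow> v \<in> V \<Longrightarrow> \<exists>e\<in>M. v \<in> e \<and> e \<in> E"
  unfolding perfect_matching_def by blast

lemma perfect_matching_Diff_iff:
  "perfect_matching V (E - S) M \<longleftrightarrow> perfect_matching V E M \<and> M \<inter> S = {}"
  unfolding perfect_matching_def by blast

lemma anti_forcing_set_meets_Diff:
  assumes "anti_forcing_set V E M S" and "perfect_matching V E M'" and "M' \<noteq> M"
  shows "S \<inter> (M' - M) \<noteq> {}"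
proof
  assume "S \<inter> (M' - M) = {}"
  with assms(1) have "M' \<inter> S = {}"
    unfolding anti_forcing_set_def by blast
  with assms(2) have "M' \<in> {M'. perfect_matching V (E - S) M'}"
    by (simp add: perfect_matching_Diff_iff)
  with assms show False
    unfolding anti_forcing_set_def by blast
qed

lemma anti_forcing_set_card_ge:
  assumes S: "anti_forcing_set V E M S" "finite S"
    and alt: "\<And>w. w \<in> W \<Longrightarrow> perfect_matching V E (P w)" "\<And>w. w \<in> W \<Longrightarrow> P w \<noteq> M"
    and disj: "disjoint_family_on (\<lambda>w. P w - M) W"
  shows "card W \<le> card S"
proof -
  have "\<forall>w\<in>W. \<exists>e. e \<in> S \<inter> (P w - M)"
    using anti_forcing_set_meets_Diff[OF S(1) alt] by blast
  then obtain f where f: "\<And>w. w \<in> W \<Longrightarrow> f w \<in> S \<inter> (P w - M)"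
    by metis
  have "inj_on f W"
  proof (rule inj_onI)
    fix w w' assume "w \<in> W" "w' \<in> W" "f w = f w'"
    then have "f w \<in> (P w - M) \<inter> (P w' - M)"
      using f by (metis IntD2 IntI)
    then show "w = w'"
      using disj \<open>w \<in> W\<close> \<open>w' \<in> W\<close> unfolding disjoint_family_on_def by blast
  qed
  with f show ?thesis
    using card_inj_on_le[OF _ _ S(2), of f W] by blast
qed

lemma anti_forcing_number_eqI:
  assumes "anti_forcing_set V E M S" "finite S" "card S = k"
    and "\<And>S. anti_forcing_set V E M S \<Longrightarrow> finite S \<Longrightarrow> k \<le> card S"
  shows "anti_forcing_number V E M = k"
  unfolding anti_forcing_number_def
proof (rule Least_equality)
  show "\<exists>S. anti_forcing_set V E M S \<and> finite S \<and> card S = k"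
    using assms(1-3) by blast
qed (use assms(4) in blast)

lemma anti_forcing_poly_empty: "anti_forcing_poly {} ({} :: 'a set set) = 1"
proof -
  have "{M. perfect_matching {} ({} :: 'a set set) M} = {{}}"
    unfolding perfect_matching_def by auto
  moreover have "anti_forcing_number {} ({} :: 'a set set) {} = 0"
    by (rule anti_forcing_number_eqI[of _ _ _ "{}"])
       (auto simp: anti_forcing_set_def perfect_matching_def)
  ultimately show ?thesis
    unfolding anti_forcing_poly_def by simp
qed

lemma inj_image_image: "inj f \<Longrightarrow> inj (image f)"
  by (simp add: inj_on_def inj_image_eq_iff)

lemma image_eq_singleton_iff_inj:
  assumes "inj f"
  shows "(\<exists>y. f ` A = {y}) \<longleftrightarrow> (\<exists>x. A = {x})"
proof
  assume "\<exists>y. f ` A = {y}"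
  then obtain y where y: "f ` A = {y}" ..
  then obtain x where x: "x \<in> A" "y = f x"
    by (metis imageE insertI1)
  have "x' = x" if "x' \<in> A" for x'
    using that x y assms by (metis image_eqI injD singletonD)
  with x have "A = {x}" by blast
  then show "\<exists>x. A = {x}" ..
qed auto

lemma perfect_matching_image_iff:
  assumes "inj f"
  shows "perfect_matching (f ` V) (image f ` E) (image f ` M) \<longleftrightarrow> perfect_matching V E M"
proof -
  have edges_at: "{e' \<in> image f ` M. f v \<in> e'} = image f ` {e \<in> M. v \<in> e}" for v
  proof (rule set_eqI, rule iffI)
    fix e' assume "e' \<in> {e' \<in> image f ` M. f v \<in> e'}"
    then obtain e where "e \<in> M" "e' = f ` e" "f v \<in> f ` e" by blast
    then show "e' \<in> image f ` {e \<in> M. v \<in> e}"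
      using assms by (auto simp: inj_image_mem_iff)
  qed auto
  have "(\<forall>v\<in>f ` V. \<exists>e. {e' \<in> image f ` M. v \<in> e'} = {e}) \<longleftrightarrow> (\<forall>v\<in>V. \<exists>e. {e \<in> M. v \<in> e} = {e})"
  proof -
    have "(\<exists>e. {e' \<in> image f ` M. f v \<in> e'} = {e}) \<longleftrightarrow> (\<exists>e. {e \<in> M. v \<in> e} = {e})" for v
      unfolding edges_at by (rule image_eq_singleton_iff_inj[OF inj_image_image[OF assms]])
    then show ?thesis
      unfolding Ball_image_comp comp_def by simp
  qed
  moreover have "image f ` M \<subseteq> image f ` E \<longleftrightarrow> M \<subseteq> E"
    using inj_image_image[OF assms] by (rule inj_image_subset_iff)
  ultimately show ?thesis
    unfolding perfect_matching_iff_singletons by (simp only:)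
qed

lemma perfect_matchings_image:
  assumes "inj f"
  shows "{M'. perfect_matching (f ` V) (image f ` E) M'} = image (image f) ` {M. perfect_matching V E M}"
proof (rule set_eqI, rule iffI)
  fix M' assume "M' \<in> {M'. perfect_matching (f ` V) (image f ` E) M'}"
  then have pm: "perfect_matching (f ` V) (image f ` E) M'" ..
  define M where "M = {e \<in> E. f ` e \<in> M'}"
  have "M' = image f ` M"
    using pm unfolding perfect_matching_def M_def by auto
  with pm have "perfect_matching V E M"
    using perfect_matching_image_iff[OF assms] by simp
  with \<open>M' = image f ` M\<close> show "M' \<in> image (image f) ` {M. perfect_matching V E M}"
    by blast
qed (auto simp: perfect_matching_image_iff[OF assms])

lemma anti_forcing_set_image_iff:
  assumes "inj f"
  shows "anti_forcing_set (f ` V) (image f ` E) (image f ` M) (image f ` S) \<longleftrightarrow> anti_forcing_set V E M S"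
proof -
  have inj: "inj (image f)" "inj (image (image f))"
    using assms by (simp_all add: inj_image_image)
  have "image f ` E - image f ` S = image f ` (E - S)" "image f ` E - image f ` M = image f ` (E - M)"
    using inj(1) by (simp_all add: image_set_diff)
  moreover have "image f ` S \<subseteq> image f ` (E - M) \<longleftrightarrow> S \<subseteq> E - M"
    using inj(1) by (rule inj_image_subset_iff)
  moreover have "image (image f) ` A = {image f ` M} \<longleftrightarrow> A = {M}" for A
    using inj(2) by (metis image_empty image_insert inj_image_eq_iff)
  ultimately show ?thesis
    unfolding anti_forcing_set_def by (simp only: perfect_matchings_image[OF assms])
qed

lemma anti_forcing_number_image:
  assumes "inj f"
  shows "anti_forcing_number (f ` V) (image f ` E) (image f ` M) = anti_forcing_number V E M"
proof -
  have inj: "inj (image f)"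
    using assms by (rule inj_image_image)
  have "(\<exists>S'. anti_forcing_set (f ` V) (image f ` E) (image f ` M) S' \<and> finite S' \<and> card S' = k) \<longleftrightarrow>
        (\<exists>S. anti_forcing_set V E M S \<and> finite S \<and> card S = k)" for k
  proof
    assume "\<exists>S'. anti_forcing_set (f ` V) (image f ` E) (image f ` M) S' \<and> finite S' \<and> card S' = k"
    then obtain S' where S': "anti_forcing_set (f ` V) (image f ` E) (image f ` M) S'" "finite S'" "card S' = k"
      by blast
    then have "S' \<subseteq> image f ` E"
      unfolding anti_forcing_set_def by blast
    then obtain S where "S' = image f ` S"
      by (rule subset_imageE)
    with S' inj show "\<exists>S. anti_forcing_set V E M S \<and> finite S \<and> card S = k"
      by (auto simp: anti_forcing_set_image_iff[OF assms] finite_image_iff card_image inj_on_subset)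
  next
    assume "\<exists>S. anti_forcing_set V E M S \<and> finite S \<and> card S = k"
    then obtain S where "anti_forcing_set V E M S" "finite S" "card S = k"
      by blast
    with inj show "\<exists>S'. anti_forcing_set (f ` V) (image f ` E) (image f ` M) S' \<and> finite S' \<and> card S' = k"
      by (intro exI[of _ "image f ` S"]) (auto simp: anti_forcing_set_image_iff[OF assms] card_image inj_on_subset)
  qed
  then show ?thesis
    unfolding anti_forcing_number_def by simp
qed

lemma anti_forcing_poly_image:
  assumes "inj f"
  shows "anti_forcing_poly (f ` V) (image f ` E) = anti_forcing_poly V E"
proof -
  have "inj (image (image f))"
    using assms by (simp add: inj_image_image)
  then show ?thesis
    unfolding anti_forcing_poly_def perfect_matchings_image[OF assms]
    by (subst sum.reindex) (auto intro: inj_on_subset simp: anti_forcing_number_image[OF assms])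
qed

section \<open>A Lucas sequence\<close>

text \<open>This is U_{n+1}(a, b) in the usual indexing of Lucas sequences, which starts with
  U_0 = 0 and U_1 = 1.\<close>

definition lucas_U :: "'a::comm_ring_1 \<Rightarrow> 'a \<Rightarrow> nat \<Rightarrow> 'a" where
  "lucas_U a b n = (\<Sum>k\<le>n. (-1)^k * of_nat ((n - k) choose k) * a^(n - 2*k) * b^k)"

lemma lucas_U_0 [simp]: "lucas_U a b 0 = 1"
  and lucas_U_1 [simp]: "lucas_U a b (Suc 0) = a"
  by (simp_all add: lucas_U_def)

lemma lucas_U_Suc_Suc: "lucas_U a b (Suc (Suc n)) = a * lucas_U a b (Suc n) - b * lucas_U a b n"
proof -
  define P where "P k = (-1)^k * of_nat ((n - k) choose Suc k) * a^(n - 2*k) * b^(Suc k)" for k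
  define Q where "Q k = (-1)^k * of_nat ((n - k) choose k) * a^(n - 2*k) * b^k" for k
  have pascal: "(Suc n - k) choose Suc k = ((n - k) choose Suc k) + ((n - k) choose k)" if "k \<le> Suc n" for k
    using that by (cases "k \<le> n") (simp_all add: Suc_diff_le)
  have "lucas_U a b (Suc (Suc n)) = a^(Suc (Suc n)) +
      (\<Sum>k\<le>Suc n. (-1)^(Suc k) * of_nat ((Suc n - k) choose Suc k) * a^(n - 2*k) * b^(Suc k))"
    unfolding lucas_U_def by (subst sum.atMost_Suc_shift) simp
  also have "\<dots> = a^(Suc (Suc n)) + (\<Sum>k\<le>Suc n. - P k - b * Q k)"
    unfolding P_def Q_def by (intro arg_cong2[where f = "(+)"] sum.cong) (simp_all add: pascal algebra_simps)
  also have "\<dots> = a^(Suc (Suc n)) - (\<Sum>k\<le>n. P k) - b * lucas_U a b n"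
    by (simp add: sum_subtractf sum_negf sum_distrib_left P_def Q_def lucas_U_def)
  also have "a^(Suc (Suc n)) - (\<Sum>k\<le>n. P k) = a * lucas_U a b (Suc n)"
  proof -
    have summand: "(-1)^(Suc k) * (of_nat ((n - k) choose Suc k) * (a * a^(n - Suc (2*k)))) * b^(Suc k) = - P k"
      for k
      \<comment> \<open>if \<open>n < 2k + 1\<close>, truncated subtraction spoils the exponent but the binomial vanishes\<close>
    proof (cases "Suc k \<le> n - k")
      case True
      then have "a * a^(n - Suc (2*k)) = a^(n - 2*k)"
        by (simp flip: power_Suc add: Suc_diff_Suc)
      then show ?thesis
        unfolding P_def by simp
    next
      case False
      then show ?thesis
        unfolding P_def by (simp add: binomial_eq_0)
    qed
    have "lucas_U a b (Suc n) = a^(Suc n) +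
        (\<Sum>k\<le>n. (-1)^(Suc k) * of_nat ((n - k) choose Suc k) * a^(n - Suc (2*k)) * b^(Suc k))"
      unfolding lucas_U_def by (subst sum.atMost_Suc_shift) simp
    then have "a * lucas_U a b (Suc n) = a^(Suc (Suc n)) +
        (\<Sum>k\<le>n. (-1)^(Suc k) * (of_nat ((n - k) choose Suc k) * (a * a^(n - Suc (2*k)))) * b^(Suc k))"
      by (simp add: sum_distrib_left algebra_simps)
    then show ?thesis
      by (simp only: summand sum_negf) simp
  qed
  finally show ?thesis .
qed

lemma lucas_U_unique:
  assumes "u 0 = 1" "u (Suc 0) = a" "\<And>n. u (Suc (Suc n)) = a * u (Suc n) - b * u n"
  shows "u n = lucas_U a b n"
proof -
  have "u n = lucas_U a b n \<and> u (Suc n) = lucas_U a b (Suc n)"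
    by (induction n) (simp_all add: assms lucas_U_Suc_Suc)
  then show ?thesis ..
qed

lemma lucas_U_reversed:
  "lucas_U a b n = (\<Sum>i = (n + 1) div 2..n. (-1)^(n - i) * of_nat (i choose (2*i - n)) * a^(2*i - n) * b^(n - i))"
proof -
  define g where "g k = (-1)^k * of_nat ((n - k) choose k) * a^(n - 2*k) * b^k" for k
  have "lucas_U a b n = (\<Sum>i\<le>n. g (n - i))"
    unfolding lucas_U_def g_def[symmetric]
    using sum.nat_diff_reindex[of g "Suc n"] by (simp add: lessThan_Suc_atMost)
  also have "\<dots> = (\<Sum>i = (n + 1) div 2..n. g (n - i))"
  proof (rule sum.mono_neutral_right)
    show "\<forall>i\<in>{..n} - {(n + 1) div 2..n}. g (n - i) = 0"
      by (auto simp: g_def binomial_eq_0)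
  qed auto
  also have "\<dots> = (\<Sum>i = (n + 1) div 2..n. (-1)^(n - i) * of_nat (i choose (2*i - n)) * a^(2*i - n) * b^(n - i))"
  proof (rule sum.cong[OF refl])
    fix i assume "i \<in> {(n + 1) div 2..n}"
    then have i: "n - i \<le> i" "n - (n - i) = i" "n - 2 * (n - i) = 2*i - n" "i - (n - i) = 2*i - n"
      by auto
    then have "i choose (n - i) = i choose (2*i - n)"
      by (metis binomial_symmetric)
    with i show "g (n - i) = (-1)^(n - i) * of_nat (i choose (2*i - n)) * a^(2*i - n) * b^(n - i)"
      unfolding g_def by simp
  qed
  finally show ?thesis .
qed

lemma power_x_plus_x2:
  fixes x :: "'a::comm_semiring_1"
  shows "(x + x^2)^j = (\<Sum>k\<le>j. of_nat (j choose k) * x^(j + k))"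
proof -
  have "(x + x^2)^j = x^j * (x + 1)^j"
    by (simp add: power2_eq_square algebra_simps flip: power_mult_distrib)
  also have "(x + 1)^j = (\<Sum>k\<le>j. of_nat (j choose k) * x^k)"
    using binomial_ring[of x 1 j] by simp
  finally show ?thesis
    by (simp add: sum_distrib_left power_add algebra_simps)
qed

lemma power_trinomial:
  fixes x :: "'a::comm_semiring_1"
  assumes "m \<le> N"
  shows "(1 + x + x^2)^m = (\<Sum>l = 0..2*N. \<Sum>j = (l + 1) div 2..l. of_nat ((m choose j) * (j choose (l - j))) * x^l)"
proof -
  define g where "g j k = of_nat (m choose j) * of_nat (j choose k) * x^(j + k)" for j k
  have "(1 + x + x^2)^m = (\<Sum>j\<le>m. of_nat (m choose j) * (x + x^2)^j)"
    using binomial_ring[of "x + x^2" 1 m] by (simp add: add_ac)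
  also have "\<dots> = (\<Sum>j\<le>m. \<Sum>k\<le>j. g j k)"
    unfolding power_x_plus_x2 g_def by (simp add: sum_distrib_left algebra_simps)
  also have "\<dots> = (\<Sum>(j, k)\<in>Sigma {..m} (\<lambda>j. {..j}). g j k)"
    by (rule sum.Sigma) auto
  also have "\<dots> = (\<Sum>(j, k)\<in>{(j, k). j + k \<le> 2*N}. g j k)"
  proof (rule sum.mono_neutral_left)
    show "finite {(j, k). j + k \<le> 2*N}"
      by (rule finite_subset[of _ "{..2*N} \<times> {..2*N}"]) auto
    show "Sigma {..m} (\<lambda>j. {..j}) \<subseteq> {(j, k). j + k \<le> 2*N}"
      using assms by auto
    have "g j k = 0" if "\<not> (j \<le> m \<and> k \<le> j)" for j k
      using that by (cases "j \<le> m") (simp_all add: g_def binomial_eq_0)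
    then show "\<forall>p\<in>{(j, k). j + k \<le> 2*N} - Sigma {..m} (\<lambda>j. {..j}). (case p of (j, k) \<Rightarrow> g j k) = 0"
      by auto
  qed
  also have "\<dots> = (\<Sum>l\<le>2*N. \<Sum>j\<le>l. g j (l - j))"
    by (rule sum.triangle_reindex_eq)
  also have "\<dots> = (\<Sum>l = 0..2*N. \<Sum>j = (l + 1) div 2..l. of_nat ((m choose j) * (j choose (l - j))) * x^l)"
  proof (rule sum.cong)
    fix l
    show "(\<Sum>j\<le>l. g j (l - j)) = (\<Sum>j = (l + 1) div 2..l. of_nat ((m choose j) * (j choose (l - j))) * x^l)"
    proof (rule sum.mono_neutral_cong_right)
      show "\<forall>j\<in>{..l} - {(l + 1) div 2..l}. g j (l - j) = 0"
        by (auto simp: g_def binomial_eq_0)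
    qed (auto simp: g_def)
  qed auto
  finally show ?thesis .
qed

section \<open>The chain of pyrene fragments\<close>

text \<open>Fragment i is the part of H_n with 4i \<le> x \<le> 4i + 4 without its two vertical edges
  at x = 4i and x = 4i + 4, the rungs i and i + 1 (coordinates as in \<open>pos\<close> below).
  \<open>Border j True\<close> and \<open>Border j False\<close> are the upper and lower end of rung j, shared by
  the fragments j - 1 and j; MR is the vertical edge shared by h_{i,1} and h_{i,2}.\<close>

datatype fvertex = T1 | T2 | T3 | U1 | U2 | U3 | D1 | D2 | D3 | B1 | B2 | B3

datatype pvertex = Inner nat fvertex | Border nat bool

datatype fedge = T12 | T23 | T1U | T3U | B12 | B23 | B1D | B3D
  | UL | U12 | U23 | UR | DL | D12 | D23 | DR | MR

fun inner_edge :: "nat \<Rightarrow> fedge \<Rightarrow> pvertex set" where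
  "inner_edge i T12 = {Inner i T1, Inner i T2}"
| "inner_edge i T23 = {Inner i T2, Inner i T3}"
| "inner_edge i T1U = {Inner i T1, Inner i U1}"
| "inner_edge i T3U = {Inner i T3, Inner i U3}"
| "inner_edge i B12 = {Inner i B1, Inner i B2}"
| "inner_edge i B23 = {Inner i B2, Inner i B3}"
| "inner_edge i B1D = {Inner i B1, Inner i D1}"
| "inner_edge i B3D = {Inner i B3, Inner i D3}"
| "inner_edge i UL = {Border i True, Inner i U1}"
| "inner_edge i U12 = {Inner i U1, Inner i U2}"
| "inner_edge i U23 = {Inner i U2, Inner i U3}"
| "inner_edge i UR = {Inner i U3, Border (Suc i) True}"
| "inner_edge i DL = {Border i False, Inner i D1}"
| "inner_edge i D12 = {Inner i D1, Inner i D2}"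
| "inner_edge i D23 = {Inner i D2, Inner i D3}"
| "inner_edge i DR = {Inner i D3, Border (Suc i) False}"
| "inner_edge i MR = {Inner i U2, Inner i D2}"

definition rung :: "nat \<Rightarrow> pvertex set" where
  "rung j = {Border j False, Border j True}"

definition chain_edges :: "nat \<Rightarrow> pvertex set set" where
  "chain_edges n = (\<Union>i<n. range (inner_edge i)) \<union> rung ` {..n}"

definition chain_vertices :: "nat \<Rightarrow> pvertex set" where
  "chain_vertices n = \<Union> (chain_edges n)"

fun fvertex_pos :: "fvertex \<Rightarrow> int \<times> int" where
  "fvertex_pos T1 = (1, 2)" | "fvertex_pos T2 = (2, 2)" | "fvertex_pos T3 = (3, 2)"
| "fvertex_pos U1 = (1, 1)" | "fvertex_pos U2 = (2, 1)" | "fvertex_pos U3 = (3, 1)"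
| "fvertex_pos D1 = (1, 0)" | "fvertex_pos D2 = (2, 0)" | "fvertex_pos D3 = (3, 0)"
| "fvertex_pos B1 = (1, -1)" | "fvertex_pos B2 = (2, -1)" | "fvertex_pos B3 = (3, -1)"

fun pos :: "pvertex \<Rightarrow> int \<times> int" where
  "pos (Inner i x) = (4 * int i + fst (fvertex_pos x), snd (fvertex_pos x))"
| "pos (Border j b) = (4 * int j, if b then 1 else 0)"

lemma fvertex_pos_inj: "fvertex_pos x = fvertex_pos y \<Longrightarrow> x = y"
  by (cases x; cases y) auto

lemma fvertex_pos_fst_bounds: "1 \<le> fst (fvertex_pos x) \<and> fst (fvertex_pos x) \<le> 3"
  by (cases x) auto

lemma inj_pos: "inj pos"
proof (rule injI)
  fix u v assume eq: "pos u = pos v"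
  have mod4: "(4 * int i + fst (fvertex_pos x)) mod 4 = fst (fvertex_pos x)" for i x
    using fvertex_pos_fst_bounds[of x] by simp
  have div4: "(4 * int i + fst (fvertex_pos x)) div 4 = int i" for i x
    using fvertex_pos_fst_bounds[of x] by simp
  show "u = v"
  proof (cases u; cases v)
    fix i x j y assume "u = Inner i x" "v = Inner j y"
    with eq div4[of i x] div4[of j y] mod4[of i x] mod4[of j y] show ?thesis
      by (auto simp: prod_eq_iff intro: fvertex_pos_inj)
  next
    fix i x j b assume "u = Inner i x" "v = Border j b"
    with eq mod4[of i x] fvertex_pos_fst_bounds[of x] show ?thesis
      by (metis fst_conv pos.simps mod_mult_self1_is_0 not_one_le_zero)
  next
    fix j b i x assume "u = Border j b" "v = Inner i x"
    with eq mod4[of i x] fvertex_pos_fst_bounds[of x] show ?thesis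
      by (metis fst_conv pos.simps mod_mult_self1_is_0 not_one_le_zero)
  qed (use eq in \<open>auto split: if_splits\<close>)
qed

lemma fragment_hexagons:
  "hexagon (4 * int i, 0) \<union> hexagon (4 * int i + 2, 0) \<union> hexagon (4 * int i + 1, 1)
     \<union> hexagon (4 * int i + 1, -1) = image pos ` (range (inner_edge i) \<union> {rung i, rung (Suc i)})"
proof -
  have "range (inner_edge i) = inner_edge i ` {T12, T23, T1U, T3U, B12, B23, B1D, B3D,
      UL, U12, U23, UR, DL, D12, D23, DR, MR}"
  proof -
    have "(UNIV :: fedge set) = {T12, T23, T1U, T3U, B12, B23, B1D, B3D,
      UL, U12, U23, UR, DL, D12, D23, DR, MR}"
      by (rule set_eqI, case_tac x) auto
    then show ?thesis by simp
  qed
  then show ?thesis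
    by (simp add: hexagon_def rung_def algebra_simps) (auto simp: insert_commute)
qed

lemma pyrene_edges_eq:
  assumes "n \<ge> 1"
  shows "pyrene_edges n = image pos ` chain_edges n"
proof -
  have rungs: "(\<Union>i<n. {rung i, rung (Suc i)}) = rung ` {..n}"
  proof (rule set_eqI, rule iffI)
    fix e assume "e \<in> rung ` {..n}"
    then obtain j where "j \<le> n" "e = rung j" by blast
    show "e \<in> (\<Union>i<n. {rung i, rung (Suc i)})"
    proof (cases "j < n")
      case False
      with \<open>j \<le> n\<close> assms have "j = Suc (n - 1)" "n - 1 < n" by auto
      with \<open>e = rung j\<close> show ?thesis by blast
    qed (use \<open>e = rung j\<close> in blast)
  qed auto
  have "pyrene_edges n = (\<Union>i<n. hexagon (4 * int i, 0) \<union> hexagon (4 * int i + 2, 0)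
      \<union> hexagon (4 * int i + 1, 1) \<union> hexagon (4 * int i + 1, -1))"
    unfolding pyrene_edges_def pyrene_hexagons_def by auto
  also have "\<dots> = image pos ` (\<Union>i<n. range (inner_edge i) \<union> {rung i, rung (Suc i)})"
    by (simp only: fragment_hexagons image_UN)
  also have "(\<Union>i<n. range (inner_edge i) \<union> {rung i, rung (Suc i)}) = chain_edges n"
    unfolding chain_edges_def UN_Un_distrib rungs ..
  finally show ?thesis .
qed

lemma pyrene_vertices_eq:
  assumes "n \<ge> 1"
  shows "pyrene_vertices n = pos ` chain_vertices n"
  unfolding pyrene_vertices_def pyrene_edges_eq[OF assms] chain_vertices_def by auto

fun fvertex_edges :: "fvertex \<Rightarrow> fedge set" where
  "fvertex_edges T1 = {T12, T1U}" | "fvertex_edges T2 = {T12, T23}" | "fvertex_edges T3 = {T23, T3U}"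
| "fvertex_edges U1 = {T1U, UL, U12}" | "fvertex_edges U2 = {U12, U23, MR}" | "fvertex_edges U3 = {U23, T3U, UR}"
| "fvertex_edges D1 = {B1D, DL, D12}" | "fvertex_edges D2 = {D12, D23, MR}" | "fvertex_edges D3 = {D23, B3D, DR}"
| "fvertex_edges B1 = {B12, B1D}" | "fvertex_edges B2 = {B12, B23}" | "fvertex_edges B3 = {B23, B3D}"

fun left_edge :: "bool \<Rightarrow> fedge" where
  "left_edge True = UL" | "left_edge False = DL"

fun right_edge :: "bool \<Rightarrow> fedge" where
  "right_edge True = UR" | "right_edge False = DR"

declare inner_edge.simps [simp del]

lemma Inner_in_inner_edge: "Inner k x \<in> inner_edge i l \<longleftrightarrow> k = i \<and> l \<in> fvertex_edges x"
  by (cases l; cases x) (auto simp: inner_edge.simps)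

lemma Border_in_inner_edge:
  "Border j b \<in> inner_edge i l \<longleftrightarrow> (j = i \<and> l = left_edge b) \<or> (j = Suc i \<and> l = right_edge b)"
  by (cases l; cases b) (auto simp: inner_edge.simps)

lemma Inner_notin_rung: "Inner k x \<notin> rung j"
  and Border_in_rung: "Border j' b \<in> rung j \<longleftrightarrow> j' = j"
  by (auto simp: rung_def)

lemma inner_edge_eq_iff: "inner_edge i l = inner_edge j l' \<longleftrightarrow> i = j \<and> l = l'"
  by (cases l; cases l') (auto simp: inner_edge.simps doubleton_eq_iff)

lemma inner_edge_neq_rung: "inner_edge i l \<noteq> rung j"
  by (cases l) (auto simp: inner_edge.simps rung_def doubleton_eq_iff)

lemma rung_eq_iff: "rung i = rung j \<longleftrightarrow> i = j"
  by (auto simp: rung_def doubleton_eq_iff)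

lemma chain_edges_cases:
  assumes "e \<in> chain_edges n"
  obtains i l where "i < n" "e = inner_edge i l" | j where "j \<le> n" "e = rung j"
  using assms unfolding chain_edges_def by blast

lemma inner_edge_in_chain_edges: "i < n \<Longrightarrow> inner_edge i l \<in> chain_edges n"
  and rung_in_chain_edges: "j \<le> n \<Longrightarrow> rung j \<in> chain_edges n"
  unfolding chain_edges_def by auto

lemma Inner_in_chain_vertices: "Inner i x \<in> chain_vertices n \<longleftrightarrow> i < n"
proof
  assume "Inner i x \<in> chain_vertices n"
  then obtain e where "e \<in> chain_edges n" "Inner i x \<in> e"
    unfolding chain_vertices_def by blast
  then show "i < n"
    by (auto elim!: chain_edges_cases simp: Inner_in_inner_edge Inner_notin_rung)
next
  assume "i < n"
  obtain l where "l \<in> fvertex_edges x"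
    by (cases x) auto
  with \<open>i < n\<close> show "Inner i x \<in> chain_vertices n"
    unfolding chain_vertices_def
    using inner_edge_in_chain_edges[of i n l] Inner_in_inner_edge[of i x i l] by blast
qed

lemma Border_in_chain_vertices: "Border j b \<in> chain_vertices n \<longleftrightarrow> j \<le> n"
proof
  assume "Border j b \<in> chain_vertices n"
  then obtain e where "e \<in> chain_edges n" "Border j b \<in> e"
    unfolding chain_vertices_def by blast
  then show "j \<le> n"
    by (auto elim!: chain_edges_cases simp: Border_in_inner_edge Border_in_rung)
next
  assume "j \<le> n"
  then show "Border j b \<in> chain_vertices n"
    unfolding chain_vertices_def
    using rung_in_chain_edges[of j n] Border_in_rung[of j b j] by blast
qed

definition fragment_matching :: "bool \<Rightarrow> bool \<Rightarrow> bool \<Rightarrow> fedge set" where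
  "fragment_matching upper lower mid =
     (if upper then {T12, T3U} else {T23, T1U}) \<union> (if lower then {B12, B3D} else {B23, B1D}) \<union>
     (if mid then {MR, if upper then UL else UR, if lower then DL else DR}
      else {if upper then U12 else U23, if lower then D12 else D23})"

lemma fragment_matching_covers_once: "\<exists>l. fvertex_edges x \<inter> fragment_matching upper lower mid = {l}"
  by (cases x; cases upper; cases lower; cases mid) (auto simp: fragment_matching_def)

lemma Ex1_two: "a \<noteq> b \<Longrightarrow> (\<exists>!l. (l = a \<or> l = b) \<and> P l) \<longleftrightarrow> (P a \<longleftrightarrow> \<not> P b)"
  by blast

lemma Ex1_three:
  "a \<noteq> b \<Longrightarrow> a \<noteq> c \<Longrightarrow> b \<noteq> c \<Longrightarrow> (\<exists>!l. (l = a \<or> l = b \<or> l = c) \<and> P l) \<longleftrightarrow>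
     (P a \<and> \<not> P b \<and> \<not> P c) \<or> (\<not> P a \<and> P b \<and> \<not> P c) \<or> (\<not> P a \<and> \<not> P b \<and> P c)"
  by blast

lemma fragment_matching_determined:
  assumes "\<And>x. \<exists>!l. l \<in> fvertex_edges x \<and> P l"
  shows "P l \<longleftrightarrow> l \<in> fragment_matching (P T12) (P B12) (P MR)"
proof -
  have "\<exists>!l. l \<in> fvertex_edges x \<and> P l" for x
    by (rule assms)
  note vertex = this[of T1] this[of T2] this[of T3] this[of U1] this[of U2] this[of U3]
    this[of D1] this[of D2] this[of D3] this[of B1] this[of B2] this[of B3]
  from vertex show ?thesis
    by (cases l) (simp_all add: Ex1_two Ex1_three fragment_matching_def; blast)+
qed

section \<open>Perfect matchings as words of fragment states\<close>

text \<open>The mixed configurations of \<^const>\<open>fragment_matching\<close>, with MR used and the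
  upper and lower parts leaning to different sides, do not occur in perfect matchings
  (lemma \<open>chain_matching.not_twisted\<close> below), so a fragment has one of six states.\<close>

datatype state = Flat bool bool | ToLeft | ToRight

fun state_edges :: "state \<Rightarrow> fedge set" where
  "state_edges (Flat a b) = fragment_matching a b False"
| "state_edges ToLeft = fragment_matching True True True"
| "state_edges ToRight = fragment_matching False False True"

lemma left_edge_in_state_edges: "left_edge b \<in> state_edges s \<longleftrightarrow> s = ToLeft"
  and right_edge_in_state_edges: "right_edge b \<in> state_edges s \<longleftrightarrow> s = ToRight"
  by (cases s; cases b; simp add: fragment_matching_def)+

definition admissible :: "state list \<Rightarrow> bool" where
  "admissible w \<longleftrightarrow> (\<forall>i. Suc i < length w \<longrightarrow> \<not> (w ! i = ToRight \<and> w ! Suc i = ToLeft))"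

definition rung_used :: "state list \<Rightarrow> nat \<Rightarrow> bool" where
  "rung_used w j \<longleftrightarrow>
     \<not> (j < length w \<and> w ! j = ToLeft) \<and> \<not> (0 < j \<and> j \<le> length w \<and> w ! (j - 1) = ToRight)"

definition matching_of :: "state list \<Rightarrow> pvertex set set" where
  "matching_of w = (\<Union>i<length w. inner_edge i ` state_edges (w ! i)) \<union> rung ` {j. j \<le> length w \<and> rung_used w j}"

lemma inner_edge_in_matching_of: "inner_edge i l \<in> matching_of w \<longleftrightarrow> i < length w \<and> l \<in> state_edges (w ! i)"
  unfolding matching_of_def by (auto simp: inner_edge_eq_iff inner_edge_neq_rung)

lemma rung_in_matching_of: "rung j \<in> matching_of w \<longleftrightarrow> j \<le> length w \<and> rung_used w j"
  unfolding matching_of_def by (auto simp: rung_eq_iff inner_edge_neq_rung[symmetric])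

lemma matching_of_subset: "matching_of w \<subseteq> chain_edges (length w)"
  unfolding matching_of_def chain_edges_def by auto

lemma matching_of_edges_at_Inner:
  "{e \<in> matching_of w. Inner i x \<in> e} = inner_edge i ` (fvertex_edges x \<inter> state_edges (w ! i))"
  if "i < length w"
  using that matching_of_subset[of w]
  by (auto elim!: chain_edges_cases simp: inner_edge_in_matching_of Inner_in_inner_edge Inner_notin_rung)

lemma matching_of_edge_at_Border:
  assumes "e \<in> matching_of w" and "Border j b \<in> e"
  shows "(j < length w \<and> w ! j = ToLeft \<and> e = inner_edge j (left_edge b)) \<or>
    (0 < j \<and> w ! (j - 1) = ToRight \<and> e = inner_edge (j - 1) (right_edge b)) \<or>
    (rung_used w j \<and> e = rung j)"
proof -
  have "e \<in> chain_edges (length w)"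
    using assms(1) matching_of_subset by blast
  then show ?thesis
  proof (cases rule: chain_edges_cases)
    case (1 i l)
    with assms have "l \<in> state_edges (w ! i)" 
      "(j = i \<and> l = left_edge b) \<or> (j = Suc i \<and> l = right_edge b)"
      by (simp_all add: inner_edge_in_matching_of Border_in_inner_edge)
    with 1 show ?thesis
      by (auto simp: left_edge_in_state_edges right_edge_in_state_edges)
  next
    case (2 j')
    with assms show ?thesis
      by (simp add: rung_in_matching_of Border_in_rung)
  qed
qed

lemma matching_of_unique_edge_at_Border:
  assumes "admissible w" and "j \<le> length w"
  shows "\<exists>e. {e \<in> matching_of w. Border j b \<in> e} = {e}"
proof -
  have no_clash: "\<not> (0 < j \<and> w ! (j - 1) = ToRight \<and> j < length w \<and> w ! j = ToLeft)"
  proof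
    assume "0 < j \<and> w ! (j - 1) = ToRight \<and> j < length w \<and> w ! j = ToLeft"
    then have "Suc (j - 1) < length w \<and> w ! (j - 1) = ToRight \<and> w ! Suc (j - 1) = ToLeft"
      by simp
    with assms(1) show False
      unfolding admissible_def by blast
  qed
  define e0 where "e0 =
    (if j < length w \<and> w ! j = ToLeft then inner_edge j (left_edge b)
     else if 0 < j \<and> w ! (j - 1) = ToRight then inner_edge (j - 1) (right_edge b)
     else rung j)"
  have "e0 \<in> matching_of w" "Border j b \<in> e0"
    using assms(2) left_edge_in_state_edges[of b ToLeft] right_edge_in_state_edges[of b ToRight]
    unfolding e0_def
    by (auto simp: inner_edge_in_matching_of rung_in_matching_of rung_used_def
      Border_in_inner_edge Border_in_rung simp del: state_edges.simps)
  moreover have "e = e0" if "e \<in> matching_of w" "Border j b \<in> e" for e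
    using matching_of_edge_at_Border[OF that] no_clash assms(2)
    unfolding e0_def rung_used_def by auto
  ultimately have "{e \<in> matching_of w. Border j b \<in> e} = {e0}"
    by blast
  then show ?thesis ..
qed

lemma matching_of_perfect:
  assumes "admissible w"
  shows "perfect_matching (chain_vertices (length w)) (chain_edges (length w)) (matching_of w)"
  unfolding perfect_matching_iff_singletons
proof (intro conjI ballI)
  fix v assume "v \<in> chain_vertices (length w)"
  then show "\<exists>e. {e \<in> matching_of w. v \<in> e} = {e}"
  proof (cases v)
    case (Inner i x)
    have "\<exists>l. fvertex_edges x \<inter> state_edges (w ! i) = {l}"
      by (cases "w ! i") (simp_all add: fragment_matching_covers_once)
    then obtain l where "fvertex_edges x \<inter> state_edges (w ! i) = {l}" ..
    with Inner \<open>v \<in> chain_vertices (length w)\<close> show ?thesis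
      by (simp add: Inner_in_chain_vertices matching_of_edges_at_Inner)
  next
    case (Border j b)
    with \<open>v \<in> chain_vertices (length w)\<close> show ?thesis
      using matching_of_unique_edge_at_Border[OF assms] by (simp add: Border_in_chain_vertices)
  qed
qed (rule matching_of_subset)

definition state_of :: "pvertex set set \<Rightarrow> nat \<Rightarrow> state" where
  "state_of M i =
     (if inner_edge i MR \<in> M then (if inner_edge i T12 \<in> M then ToLeft else ToRight)
      else Flat (inner_edge i T12 \<in> M) (inner_edge i B12 \<in> M))"

definition word_of :: "pvertex set set \<Rightarrow> nat \<Rightarrow> state list" where
  "word_of M n = map (state_of M) [0..<n]"

locale chain_matching =
  fixes n :: nat and M :: "pvertex set set"
  assumes perfect: "perfect_matching (chain_vertices n) (chain_edges n) M"
begin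

lemma unique_edge_at_Inner:
  assumes "i < n"
  shows "\<exists>!l. l \<in> fvertex_edges x \<and> inner_edge i l \<in> M"
proof -
  have v: "Inner i x \<in> chain_vertices n"
    using assms by (simp add: Inner_in_chain_vertices)
  then obtain e where e: "e \<in> M" "Inner i x \<in> e" "e \<in> chain_edges n"
    using perfect_matching_covers[OF perfect] by blast
  from e(3) obtain l where "e = inner_edge i l" "l \<in> fvertex_edges x"
    using e(2) by (cases rule: chain_edges_cases) (auto simp: Inner_in_inner_edge Inner_notin_rung)
  moreover have "l' = l" if "l' \<in> fvertex_edges x" "inner_edge i l' \<in> M" for l'
    using perfect_matching_edge_unique[OF perfect v that(2) e(1)] that(1) e(2) calculation
    by (simp add: Inner_in_inner_edge inner_edge_eq_iff)
  ultimately show ?thesis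
    using e(1) by blast
qed

lemma inner_edge_in_iff_fragment_matching:
  assumes "i < n"
  shows "inner_edge i l \<in> M \<longleftrightarrow>
    l \<in> fragment_matching (inner_edge i T12 \<in> M) (inner_edge i B12 \<in> M) (inner_edge i MR \<in> M)"
  using fragment_matching_determined[of "\<lambda>l. inner_edge i l \<in> M"] unique_edge_at_Inner[OF assms] by blast

lemma Border_covered:
  assumes "j \<le> n"
  shows "rung j \<in> M \<or> (0 < j \<and> inner_edge (j - 1) (right_edge b) \<in> M) \<or> (j < n \<and> inner_edge j (left_edge b) \<in> M)"
proof -
  have "Border j b \<in> chain_vertices n"
    using assms by (simp add: Border_in_chain_vertices)
  then obtain e where e: "e \<in> M" "Border j b \<in> e" "e \<in> chain_edges n"
    using perfect_matching_covers[OF perfect] by blast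
  from e(3) show ?thesis
    using e(1,2) by (cases rule: chain_edges_cases) (auto simp: Border_in_inner_edge Border_in_rung)
qed

lemma Border_edge_unique:
  assumes "j \<le> n" "e \<in> M" "e' \<in> M" "Border j b \<in> e" "Border j b \<in> e'"
  shows "e = e'"
  using perfect_matching_edge_unique[OF perfect _ assms(2-5)] assms(1)
  by (simp add: Border_in_chain_vertices)

lemma side_edge_in_iff:
  assumes "i < n"
  shows "inner_edge i (left_edge b) \<in> M \<longleftrightarrow>
      inner_edge i MR \<in> M \<and> inner_edge i (if b then T12 else B12) \<in> M"
    and "inner_edge i (right_edge b) \<in> M \<longleftrightarrow>
      inner_edge i MR \<in> M \<and> inner_edge i (if b then T12 else B12) \<notin> M"
  using inner_edge_in_iff_fragment_matching[OF assms, of "left_edge b"]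
    inner_edge_in_iff_fragment_matching[OF assms, of "right_edge b"]
  by (cases b; simp add: fragment_matching_def)+

lemma left_edge_excludes_rung:
  assumes "i < n" "inner_edge i (left_edge b) \<in> M"
  shows "rung i \<notin> M"
  using Border_edge_unique[of i "inner_edge i (left_edge b)" "rung i" b] assms
  by (auto simp: Border_in_inner_edge Border_in_rung inner_edge_neq_rung)

lemma right_edge_excludes_rung:
  assumes "0 < j" "j \<le> n" "inner_edge (j - 1) (right_edge b) \<in> M"
  shows "rung j \<notin> M"
  using Border_edge_unique[of j "inner_edge (j - 1) (right_edge b)" "rung j" b] assms
  by (auto simp: Border_in_inner_edge Border_in_rung inner_edge_neq_rung)

text \<open>A fragment whose middle edge MR is used but whose upper and lower parts lean to
  different sides forces its left neighbour into the same configuration; the first fragment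
  has no left neighbour.\<close>

lemma not_twisted:
  assumes "i < n"
  shows "\<not> (inner_edge i (left_edge b) \<in> M \<and> inner_edge i (right_edge (\<not> b)) \<in> M)"
  using assms
proof (induction i)
  case 0
  show ?case
  proof
    assume twisted: "inner_edge 0 (left_edge b) \<in> M \<and> inner_edge 0 (right_edge (\<not> b)) \<in> M"
    then have "inner_edge 0 (left_edge (\<not> b)) \<notin> M" "rung 0 \<notin> M"
      using 0 side_edge_in_iff[of 0 "\<not> b"] left_edge_excludes_rung[of 0 b] by simp_all
    then show False
      using Border_covered[of 0 "\<not> b"] by simp
  qed
next
  case (Suc k)
  show ?case
  proof
    assume twisted: "inner_edge (Suc k) (left_edge b) \<in> M \<and> inner_edge (Suc k) (right_edge (\<not> b)) \<in> M"
    then have "inner_edge (Suc k) (left_edge (\<not> b)) \<notin> M" "rung (Suc k) \<notin> M"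
      using Suc.prems side_edge_in_iff[of "Suc k" "\<not> b"] left_edge_excludes_rung[of "Suc k" b] by simp_all
    then have right: "inner_edge k (right_edge (\<not> b)) \<in> M"
      using Border_covered[of "Suc k" "\<not> b"] Suc.prems by simp
    have "inner_edge k (right_edge b) \<notin> M"
      using Border_edge_unique[of "Suc k" "inner_edge (Suc k) (left_edge b)" "inner_edge k (right_edge b)" b]
        twisted Suc.prems by (auto simp: Border_in_inner_edge inner_edge_eq_iff)
    with right have "inner_edge k (left_edge b) \<in> M"
      using Suc.prems side_edge_in_iff[of k b] side_edge_in_iff[of k "\<not> b"] by simp
    with right Suc show False
      by simp
  qed
qed

lemma MR_balanced:
  assumes "i < n" "inner_edge i MR \<in> M"
  shows "inner_edge i T12 \<in> M \<longleftrightarrow> inner_edge i B12 \<in> M"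
  using assms not_twisted[of i True] not_twisted[of i False]
    side_edge_in_iff[of i True] side_edge_in_iff[of i False]
  by auto

lemma state_edges_state_of:
  assumes "i < n"
  shows "state_edges (state_of M i) =
    fragment_matching (inner_edge i T12 \<in> M) (inner_edge i B12 \<in> M) (inner_edge i MR \<in> M)"
  using MR_balanced[OF assms] unfolding state_of_def by auto

lemma inner_edge_in_iff_state_of:
  assumes "i < n"
  shows "inner_edge i l \<in> M \<longleftrightarrow> l \<in> state_edges (state_of M i)"
  unfolding state_edges_state_of[OF assms] by (rule inner_edge_in_iff_fragment_matching[OF assms])

lemma state_of_eq_ToLeft_iff: "i < n \<Longrightarrow> state_of M i = ToLeft \<longleftrightarrow> inner_edge i (left_edge b) \<in> M"
  and state_of_eq_ToRight_iff: "i < n \<Longrightarrow> state_of M i = ToRight \<longleftrightarrow> inner_edge i (right_edge b) \<in> M"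
  by (simp_all add: inner_edge_in_iff_state_of left_edge_in_state_edges right_edge_in_state_edges)

lemma rung_in_iff_rung_used:
  assumes "j \<le> n"
  shows "rung j \<in> M \<longleftrightarrow> rung_used (word_of M n) j"
  using assms Border_covered[OF assms, of True] left_edge_excludes_rung[of j True]
    right_edge_excludes_rung[of j True]
  by (auto simp: rung_used_def word_of_def state_of_eq_ToLeft_iff[of _ True] state_of_eq_ToRight_iff[of _ True])

lemma admissible_word_of: "admissible (word_of M n)"
  unfolding admissible_def
proof (intro allI impI notI)
  fix i assume "Suc i < length (word_of M n)" "word_of M n ! i = ToRight \<and> word_of M n ! Suc i = ToLeft"
  then have "Suc i < n" "inner_edge i (right_edge True) \<in> M" "inner_edge (Suc i) (left_edge True) \<in> M"
    by (auto simp: word_of_def state_of_eq_ToLeft_iff[of _ True] state_of_eq_ToRight_iff[of _ True])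
  then show False
    using Border_edge_unique[of "Suc i" "inner_edge i (right_edge True)" "inner_edge (Suc i) (left_edge True)" True]
    by (simp add: Border_in_inner_edge inner_edge_eq_iff)
qed

lemma matching_of_word_of: "matching_of (word_of M n) = M"
proof (rule set_eqI)
  fix e
  have "M \<subseteq> chain_edges n" "matching_of (word_of M n) \<subseteq> chain_edges n"
    using perfect matching_of_subset[of "word_of M n"] by (auto simp: perfect_matching_def word_of_def)
  then consider "e \<notin> chain_edges n" "e \<notin> M" "e \<notin> matching_of (word_of M n)"
    | i l where "i < n" "e = inner_edge i l" | j where "j \<le> n" "e = rung j"
    by (metis chain_edges_cases subsetD)
  then show "e \<in> matching_of (word_of M n) \<longleftrightarrow> e \<in> M"
    by cases (auto simp: inner_edge_in_matching_of rung_in_matching_of inner_edge_in_iff_state_of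
      rung_in_iff_rung_used word_of_def)
qed

end

lemma word_of_matching_of: "word_of (matching_of w) (length w) = w"
proof (rule nth_equalityI)
  fix i assume "i < length (word_of (matching_of w) (length w))"
  then show "word_of (matching_of w) (length w) ! i = w ! i"
    by (cases "w ! i") (auto simp: word_of_def state_of_def inner_edge_in_matching_of fragment_matching_def)
qed (simp add: word_of_def)

definition words :: "nat \<Rightarrow> state list set" where
  "words n = {w. length w = n \<and> admissible w}"

lemma perfect_matchings_chain:
  "{M. perfect_matching (chain_vertices n) (chain_edges n) M} = matching_of ` words n"
proof (rule set_eqI, rule iffI)
  fix M assume "M \<in> {M. perfect_matching (chain_vertices n) (chain_edges n) M}"
  then interpret chain_matching n M
    by unfold_locales simp
  have "word_of M n \<in> words n"
    unfolding words_def using admissible_word_of by (simp add: word_of_def)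
  then show "M \<in> matching_of ` words n"
    using matching_of_word_of by (metis image_eqI)
qed (auto simp: words_def matching_of_perfect)

lemma inj_on_matching_of: "inj_on matching_of (words n)"
  by (rule inj_on_inverseI[where g = "\<lambda>M. word_of M n"]) (auto simp: words_def word_of_matching_of)

section \<open>The anti-forcing number of a matching\<close>

fun state_cost :: "state \<Rightarrow> nat" where
  "state_cost (Flat a b) = (if a = b then 3 else 2)"
| "state_cost ToLeft = 1"
| "state_cost ToRight = 1"

definition cost :: "state list \<Rightarrow> nat" where
  "cost w = sum_list (map state_cost w)"

fun forcing_edges :: "nat \<Rightarrow> state \<Rightarrow> pvertex set set" where
  "forcing_edges i (Flat a b) = {inner_edge i (if a then T1U else T3U), inner_edge i (if b then B1D else B3D)}
     \<union> (if a = b then {inner_edge i MR} else {})"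
| "forcing_edges i ToLeft = {rung i}"
| "forcing_edges i ToRight = {rung (Suc i)}"

definition anti_forcing_edges :: "state list \<Rightarrow> pvertex set set" where
  "anti_forcing_edges w = (\<Union>i<length w. forcing_edges i (w ! i))"

lemma finite_forcing_edges: "finite (forcing_edges i s)"
  by (cases s) auto

lemma card_forcing_edges: "card (forcing_edges i s) = state_cost s"
  by (cases s) (auto simp: inner_edge_eq_iff card_insert_if)

lemma forcing_edges_disjoint:
  assumes "admissible w" "i < length w" "j < length w" "i \<noteq> j"
  shows "forcing_edges i (w ! i) \<inter> forcing_edges j (w ! j) = {}"
proof -
  have "\<not> (w ! k = ToRight \<and> w ! Suc k = ToLeft)" if "Suc k < length w" for k
    using assms(1) that unfolding admissible_def by blast
  with assms(2-4) show ?thesis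
    by (cases "w ! i"; cases "w ! j")
      (auto simp: inner_edge_eq_iff inner_edge_neq_rung inner_edge_neq_rung[symmetric] rung_eq_iff)
qed

lemma card_anti_forcing_edges: "admissible w \<Longrightarrow> card (anti_forcing_edges w) = cost w"
  unfolding anti_forcing_edges_def cost_def sum_list_sum_nth
  by (subst card_UN_disjoint)
    (auto simp: finite_forcing_edges card_forcing_edges forcing_edges_disjoint atLeast0LessThan)

lemma finite_anti_forcing_edges: "finite (anti_forcing_edges w)"
  unfolding anti_forcing_edges_def by (simp add: finite_forcing_edges)

lemma anti_forcing_edges_subset: "anti_forcing_edges w \<subseteq> chain_edges (length w) - matching_of w"
proof -
  have "forcing_edges i (w ! i) \<subseteq> chain_edges (length w) - matching_of w" if "i < length w" for i
    using that by (cases "w ! i")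
      (auto simp: inner_edge_in_chain_edges rung_in_chain_edges inner_edge_in_matching_of
        rung_in_matching_of rung_used_def fragment_matching_def)
  then show ?thesis
    unfolding anti_forcing_edges_def by blast
qed

lemma Flat_forced:
  assumes "w ! i = Flat a b" "i < length w'"
    and "matching_of w' \<inter> forcing_edges i (w ! i) = {}"
  shows "w' ! i = Flat a b"
proof -
  have "inner_edge i (if a then T1U else T3U) \<notin> matching_of w'"
    "inner_edge i (if b then B1D else B3D) \<notin> matching_of w'"
    "a = b \<Longrightarrow> inner_edge i MR \<notin> matching_of w'"
    using assms(1,3) by auto
  then have "(if a then T1U else T3U) \<notin> state_edges (w' ! i)"
    "(if b then B1D else B3D) \<notin> state_edges (w' ! i)"
    "a = b \<Longrightarrow> MR \<notin> state_edges (w' ! i)"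
    using assms(2) by (simp_all add: inner_edge_in_matching_of)
  then show ?thesis
    by (cases "w' ! i"; cases a; cases b) (auto simp: fragment_matching_def split: if_splits)
qed

text \<open>Flat fragments are forced locally.  A blocked rung i forces ToLeft at i unless
  fragment i - 1 is ToRight, which is excluded by induction from the left; ToRight is forced
  symmetrically by induction from the right.\<close>

lemma eq_if_avoids_anti_forcing_edges:
  assumes adm: "admissible w" "admissible w'" and len: "length w' = length w"
    and avoid: "matching_of w' \<inter> anti_forcing_edges w = {}"
  shows "w' = w"
proof -
  let ?n = "length w"
  have blocked: "e \<notin> matching_of w'" if "i < ?n" "e \<in> forcing_edges i (w ! i)" for i e
    using that avoid unfolding anti_forcing_edges_def by blast
  have no_clash: "\<not> (w ! k = ToRight \<and> w ! Suc k = ToLeft)" if "Suc k < ?n" for k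
    using adm(1) that unfolding admissible_def by blast
  have flat: "w' ! i = w ! i" if "i < ?n" "w ! i = Flat a b" for i a b
    using Flat_forced[of w i a b w'] that len blocked[OF that(1)] by auto
  have left: "w' ! i = ToLeft" if "i < ?n" "w ! i = ToLeft" for i
    using that
  proof (induction i)
    case 0
    then have "\<not> rung_used w' 0"
      using blocked[of 0 "rung 0"] len by (simp add: rung_in_matching_of)
    with 0 len show ?case
      by (simp add: rung_used_def)
  next
    case (Suc k)
    then have "\<not> rung_used w' (Suc k)"
      using blocked[of "Suc k" "rung (Suc k)"] len by (simp add: rung_in_matching_of)
    moreover have "w' ! k \<noteq> ToRight"
      using Suc flat[of k] no_clash[of k] by (cases "w ! k") auto
    ultimately show ?case
      using Suc.prems len by (simp add: rung_used_def)
  qed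
  have right: "w' ! i = ToRight" if "i < ?n" "w ! i = ToRight" for i
    using that
  proof (induction "?n - i" arbitrary: i rule: less_induct)
    case less
    then have "\<not> rung_used w' (Suc i)"
      using blocked[of i "rung (Suc i)"] len by (simp add: rung_in_matching_of)
    moreover have "w' ! Suc i \<noteq> ToLeft" if "Suc i < ?n"
      using less that flat[of "Suc i"] no_clash[of i] by (cases "w ! Suc i") auto
    ultimately show ?case
      using less.prems len by (auto simp: rung_used_def)
  qed
  show ?thesis
  proof (rule nth_equalityI)
    fix i assume "i < length w'"
    with len show "w' ! i = w ! i"
      using flat left right by (cases "w ! i") auto
  qed (rule len)
qed

lemma anti_forcing_set_anti_forcing_edges:
  assumes "admissible w"
  shows "anti_forcing_set (chain_vertices (length w)) (chain_edges (length w)) (matching_of w) (anti_forcing_edges w)"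
  unfolding anti_forcing_set_def
proof
  show "anti_forcing_edges w \<subseteq> chain_edges (length w) - matching_of w"
    by (rule anti_forcing_edges_subset)
  have "M = matching_of w"
    if "perfect_matching (chain_vertices (length w)) (chain_edges (length w) - anti_forcing_edges w) M" for M
  proof -
    from that have perfect: "perfect_matching (chain_vertices (length w)) (chain_edges (length w)) M"
      and avoid: "M \<inter> anti_forcing_edges w = {}"
      by (simp_all add: perfect_matching_Diff_iff)
    interpret chain_matching "length w" M
      by unfold_locales (rule perfect)
    have "matching_of (word_of M (length w)) \<inter> anti_forcing_edges w = {}"
      using avoid by (simp only: matching_of_word_of)
    then have "word_of M (length w) = w"
      using eq_if_avoids_anti_forcing_edges[OF assms admissible_word_of] by (simp add: word_of_def)
    then show ?thesis
      using matching_of_word_of by simp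
  qed
  moreover have "perfect_matching (chain_vertices (length w)) (chain_edges (length w) - anti_forcing_edges w) (matching_of w)"
    using matching_of_perfect[OF assms] anti_forcing_edges_subset[of w]
    by (auto simp: perfect_matching_Diff_iff)
  ultimately show "{M. perfect_matching (chain_vertices (length w)) (chain_edges (length w) - anti_forcing_edges w) M} = {matching_of w}"
    by blast
qed

text \<open>Alternating cycles of the matching of a word, by the fragment that determines them:
  the upper and the lower hexagon of a Flat fragment, for \<open>Flat a a\<close> a cycle through MR
  that turns the fragment together with the adjacent run of fragments leaning towards it
  into fragments leaning the other way, and for a leaning fragment the cycle that makes it
  Flat.\<close>

datatype cycle = Upper nat | Lower nat | Middle nat | Swap nat

fun fragment_cycles :: "nat \<Rightarrow> state \<Rightarrow> cycle set" where
  "fragment_cycles i (Flat a b) = {Upper i, Lower i} \<union> (if a = b then {Middle i} else {})"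
| "fragment_cycles i ToLeft = {Swap i}"
| "fragment_cycles i ToRight = {Swap i}"

definition cycles :: "state list \<Rightarrow> cycle set" where
  "cycles w = (\<Union>i<length w. fragment_cycles i (w ! i))"

lemma card_cycles: "card (cycles w) = cost w"
proof -
  have "finite (fragment_cycles i s)" "card (fragment_cycles i s) = state_cost s" for i s
    by (cases s; auto)+
  moreover have "fragment_cycles i s \<inter> fragment_cycles j s' = {}" if "i \<noteq> j" for i j s s'
    using that by (cases s; cases s') auto
  ultimately show ?thesis
    unfolding cycles_def cost_def sum_list_sum_nth
    by (subst card_UN_disjoint) (auto simp: atLeast0LessThan)
qed

definition upper_edges :: "fedge set" where
  "upper_edges = {T12, T23, T1U, T3U, U12, U23}"

definition lower_edges :: "fedge set" where
  "lower_edges = {B12, B23, B1D, B3D, D12, D23}"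

definition next_flat :: "state list \<Rightarrow> nat \<Rightarrow> nat" where
  "next_flat w j = (LEAST m. j < m \<and> w ! m \<noteq> ToRight)"

definition prev_flat :: "state list \<Rightarrow> nat \<Rightarrow> nat" where
  "prev_flat w j = (GREATEST m. m < j \<and> w ! m \<noteq> ToLeft)"

text \<open>Every edge outside the matching of \<open>w\<close> is assigned to one cycle of \<open>w\<close>; the
  alternative matching for a cycle only adds edges assigned to that cycle, which makes the
  differences to the matching of \<open>w\<close> pairwise disjoint.\<close>

definition edge_owner :: "state list \<Rightarrow> nat \<Rightarrow> fedge \<Rightarrow> cycle" where
  "edge_owner w j l = (case w ! j of
     Flat a b \<Rightarrow> (if l \<in> upper_edges then Upper j else if l \<in> lower_edges then Lower j else Middle j)
   | ToLeft \<Rightarrow> (if l \<in> {U12, D12} then Swap j else Middle (prev_flat w j))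
   | ToRight \<Rightarrow> (if l \<in> {U23, D23} then Swap j else Middle (next_flat w j)))"

definition rung_owner :: "state list \<Rightarrow> nat \<Rightarrow> cycle" where
  "rung_owner w j = (if j < length w \<and> w ! j = ToLeft then Swap j else Swap (j - 1))"

definition is_alternative :: "state list \<Rightarrow> cycle \<Rightarrow> state list \<Rightarrow> bool" where
  "is_alternative w c w' \<longleftrightarrow> admissible w' \<and> length w' = length w \<and> w' \<noteq> w \<and>
     (\<forall>j<length w. \<forall>l \<in> state_edges (w' ! j) - state_edges (w ! j). edge_owner w j l = c) \<and>
     (\<forall>j\<le>length w. rung_used w' j \<and> \<not> rung_used w j \<longrightarrow> rung_owner w j = c)"

lemma new_edges_disjoint:
  assumes "is_alternative w c w1" "is_alternative w c' w2" "c \<noteq> c'"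
  shows "(matching_of w1 - matching_of w) \<inter> (matching_of w2 - matching_of w) = {}"
proof (rule ccontr)
  assume "(matching_of w1 - matching_of w) \<inter> (matching_of w2 - matching_of w) \<noteq> {}"
  then obtain e where e: "e \<in> matching_of w1" "e \<in> matching_of w2" "e \<notin> matching_of w"
    by blast
  have len: "length w1 = length w" "length w2 = length w"
    using assms(1,2) unfolding is_alternative_def by simp_all
  have "e \<in> chain_edges (length w)"
    using e(1) matching_of_subset len(1) by fastforce
  then show False
  proof (cases rule: chain_edges_cases)
    case (1 i l)
    with e len have "l \<in> state_edges (w1 ! i) - state_edges (w ! i)" "l \<in> state_edges (w2 ! i) - state_edges (w ! i)"
      by (simp_all add: inner_edge_in_matching_of)
    with \<open>i < length w\<close> have "edge_owner w i l = c" "edge_owner w i l = c'"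
      using assms(1,2) unfolding is_alternative_def by blast+
    with assms(3) show False
      by simp
  next
    case (2 j)
    with e len have "rung_used w1 j" "rung_used w2 j" "\<not> rung_used w j"
      by (simp_all add: rung_in_matching_of)
    with \<open>j \<le> length w\<close> have "rung_owner w j = c" "rung_owner w j = c'"
      using assms(1,2) unfolding is_alternative_def by blast+
    with assms(3) show False
      by simp
  qed
qed

lemma admissible_update_Flat: "admissible w \<Longrightarrow> admissible (w[i := Flat a b])"
  unfolding admissible_def
  by (cases "i < length w") (auto simp: nth_list_update list_update_beyond split: if_splits)

lemma is_alternative_update_Flat:
  assumes "admissible w" "i < length w" "w ! i \<noteq> Flat a b"
    and "\<forall>l \<in> state_edges (Flat a b) - state_edges (w ! i). edge_owner w i l = c"
    and "\<forall>j\<le>length w. rung_used (w[i := Flat a b]) j \<and> \<not> rung_used w j \<longrightarrow> rung_owner w j = c"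
  shows "is_alternative w c (w[i := Flat a b])"
proof -
  have "w[i := Flat a b] \<noteq> w"
    using assms(2,3) by (metis nth_list_update_eq)
  with assms show ?thesis
    unfolding is_alternative_def
    using admissible_update_Flat[OF assms(1)] by (auto simp: nth_list_update)
qed

lemma Flat_update_keeps_rungs:
  "w ! i = Flat a b \<Longrightarrow> rung_used (w[i := Flat c d]) j = rung_used w j"
  unfolding rung_used_def
  by (cases "i < length w") (auto simp: nth_list_update list_update_beyond split: if_splits)

lemma is_alternative_Upper:
  assumes "admissible w" "i < length w" "w ! i = Flat a b"
  shows "is_alternative w (Upper i) (w[i := Flat (\<not> a) b])"
proof (rule is_alternative_update_Flat[OF assms(1,2)])
  show "\<forall>l \<in> state_edges (Flat (\<not> a) b) - state_edges (w ! i). edge_owner w i l = Upper i"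
    using assms(3) by (cases a; cases b) (auto simp: edge_owner_def fragment_matching_def upper_edges_def)
qed (use assms(3) Flat_update_keeps_rungs in auto)

lemma is_alternative_Lower:
  assumes "admissible w" "i < length w" "w ! i = Flat a b"
  shows "is_alternative w (Lower i) (w[i := Flat a (\<not> b)])"
proof (rule is_alternative_update_Flat[OF assms(1,2)])
  show "\<forall>l \<in> state_edges (Flat a (\<not> b)) - state_edges (w ! i). edge_owner w i l = Lower i"
    using assms(3) by (cases a; cases b)
      (auto simp: edge_owner_def fragment_matching_def upper_edges_def lower_edges_def)
qed (use assms(3) Flat_update_keeps_rungs in auto)

lemma is_alternative_Swap_ToLeft:
  assumes "admissible w" "i < length w" "w ! i = ToLeft"
  shows "is_alternative w (Swap i) (w[i := Flat True True])"
proof (rule is_alternative_update_Flat[OF assms(1,2)])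
  show "\<forall>l \<in> state_edges (Flat True True) - state_edges (w ! i). edge_owner w i l = Swap i"
    using assms(3) by (auto simp: edge_owner_def fragment_matching_def)
  show "\<forall>j\<le>length w. rung_used (w[i := Flat True True]) j \<and> \<not> rung_used w j \<longrightarrow> rung_owner w j = Swap i"
    using assms(2,3) by (auto simp: rung_used_def rung_owner_def nth_list_update split: if_splits)
qed (use assms(3) in simp)

lemma is_alternative_Swap_ToRight:
  assumes "admissible w" "i < length w" "w ! i = ToRight"
  shows "is_alternative w (Swap i) (w[i := Flat False False])"
proof (rule is_alternative_update_Flat[OF assms(1,2)])
  show "\<forall>l \<in> state_edges (Flat False False) - state_edges (w ! i). edge_owner w i l = Swap i"
    using assms(3) by (auto simp: edge_owner_def fragment_matching_def)
  have "\<not> (Suc i < length w \<and> w ! Suc i = ToLeft)"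
    using assms(1,3) unfolding admissible_def by blast
  then show "\<forall>j\<le>length w. rung_used (w[i := Flat False False]) j \<and> \<not> rung_used w j \<longrightarrow> rung_owner w j = Swap i"
    using assms(2,3) by (auto simp: rung_used_def rung_owner_def nth_list_update split: if_splits)
qed (use assms(3) in simp)

definition run_start :: "state list \<Rightarrow> nat \<Rightarrow> nat" where
  "run_start w i = (LEAST k. \<forall>m. k \<le> m \<and> m < i \<longrightarrow> w ! m = ToRight)"

definition run_end :: "state list \<Rightarrow> nat \<Rightarrow> nat" where
  "run_end w i = (LEAST k. i \<le> k \<and> \<not> (Suc k < length w \<and> w ! Suc k = ToLeft))"

lemma run_start_le: "run_start w i \<le> i"
proof -
  have "\<forall>m. i \<le> m \<and> m < i \<longrightarrow> w ! m = ToRight"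
    using leD by blast
  then show ?thesis
    unfolding run_start_def by (rule Least_le)
qed

lemma run_start_ToRight:
  assumes "run_start w i \<le> m" "m < i"
  shows "w ! m = ToRight"
proof -
  have "\<forall>m. run_start w i \<le> m \<and> m < i \<longrightarrow> w ! m = ToRight"
    unfolding run_start_def by (rule LeastI[of _ i]) (use leD in blast)
  with assms show ?thesis
    by blast
qed

lemma run_start_maximal:
  assumes "0 < run_start w i"
  shows "w ! (run_start w i - 1) \<noteq> ToRight"
proof
  assume "w ! (run_start w i - 1) = ToRight"
  moreover have "w ! m = ToRight" if "run_start w i - 1 < m" "m < i" for m
    using that by (intro run_start_ToRight) simp_all
  ultimately have "\<forall>m. run_start w i - 1 \<le> m \<and> m < i \<longrightarrow> w ! m = ToRight"
    using le_neq_implies_less by blast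
  then have "run_start w i \<le> run_start w i - 1"
    unfolding run_start_def by (rule Least_le)
  with assms show False
    by simp
qed

lemma run_end_props:
  assumes "i < length w"
  shows "i \<le> run_end w i" "run_end w i < length w"
    "\<And>m. i < m \<Longrightarrow> m \<le> run_end w i \<Longrightarrow> w ! m = ToLeft"
    "\<not> (Suc (run_end w i) < length w \<and> w ! Suc (run_end w i) = ToLeft)"
proof -
  let ?P = "\<lambda>k. i \<le> k \<and> \<not> (Suc k < length w \<and> w ! Suc k = ToLeft)"
  have "?P (length w - 1)"
    using assms by auto
  then have P: "?P (run_end w i)" and le: "run_end w i \<le> length w - 1"
    unfolding run_end_def by (rule LeastI, rule Least_le)
  then show "i \<le> run_end w i" "run_end w i < length w"
    "\<not> (Suc (run_end w i) < length w \<and> w ! Suc (run_end w i) = ToLeft)"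
    using assms by auto
  fix m assume m: "i < m" "m \<le> run_end w i"
  then have "\<not> ?P (m - 1)"
    unfolding run_end_def by (intro not_less_Least) simp
  with m show "w ! m = ToLeft"
    by simp
qed

lemma next_flat_eqI:
  assumes "j < m" "w ! m \<noteq> ToRight" "\<And>p. j < p \<Longrightarrow> p < m \<Longrightarrow> w ! p = ToRight"
  shows "next_flat w j = m"
  unfolding next_flat_def
proof (rule Least_equality)
  show "j < m \<and> w ! m \<noteq> ToRight"
    using assms(1,2) ..
  show "m \<le> p" if "j < p \<and> w ! p \<noteq> ToRight" for p
    using that assms(3)[of p] by (meson not_le)
qed

lemma prev_flat_eqI:
  assumes "m < j" "w ! m \<noteq> ToLeft" "\<And>p. m < p \<Longrightarrow> p < j \<Longrightarrow> w ! p = ToLeft"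
  shows "prev_flat w j = m"
  unfolding prev_flat_def
proof (rule Greatest_equality)
  show "m < j \<and> w ! m \<noteq> ToLeft"
    using assms(1,2) ..
  show "p \<le> m" if "p < j \<and> w ! p \<noteq> ToLeft" for p
    using that assms(3)[of p] by (meson not_le)
qed

definition lean_left :: "state list \<Rightarrow> nat \<Rightarrow> state list" where
  "lean_left w i = map (\<lambda>j. if run_start w i \<le> j \<and> j \<le> i then ToLeft else w ! j) [0..<length w]"

definition lean_right :: "state list \<Rightarrow> nat \<Rightarrow> state list" where
  "lean_right w i = map (\<lambda>j. if i \<le> j \<and> j \<le> run_end w i then ToRight else w ! j) [0..<length w]"

lemma length_lean_left [simp]: "length (lean_left w i) = length w"
  and length_lean_right [simp]: "length (lean_right w i) = length w"
  by (simp_all add: lean_left_def lean_right_def)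

lemma nth_lean_left:
  "j < length w \<Longrightarrow> lean_left w i ! j = (if run_start w i \<le> j \<and> j \<le> i then ToLeft else w ! j)"
  by (simp add: lean_left_def)

lemma nth_lean_right:
  "j < length w \<Longrightarrow> lean_right w i ! j = (if i \<le> j \<and> j \<le> run_end w i then ToRight else w ! j)"
  by (simp add: lean_right_def)

lemma admissible_lean_left:
  assumes "admissible w"
  shows "admissible (lean_left w i)"
  unfolding admissible_def
proof (intro allI impI notI)
  fix m assume m: "Suc m < length (lean_left w i)"
    and clash: "lean_left w i ! m = ToRight \<and> lean_left w i ! Suc m = ToLeft"
  then have "\<not> (run_start w i \<le> m \<and> m \<le> i)" "w ! m = ToRight"
    using nth_lean_left[of m w i] by (auto split: if_splits)
  moreover have "\<not> (w ! m = ToRight \<and> w ! Suc m = ToLeft)"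
    using assms m unfolding admissible_def by simp
  ultimately have "Suc m = run_start w i"
    using clash m nth_lean_left[of "Suc m" w i] by (auto split: if_splits)
  with \<open>w ! m = ToRight\<close> show False
    using run_start_maximal[of w i] by (metis diff_Suc_1 zero_less_Suc)
qed

lemma admissible_lean_right:
  assumes "admissible w" "i < length w"
  shows "admissible (lean_right w i)"
  unfolding admissible_def
proof (intro allI impI notI)
  fix m assume m: "Suc m < length (lean_right w i)"
    and clash: "lean_right w i ! m = ToRight \<and> lean_right w i ! Suc m = ToLeft"
  then have "\<not> (i \<le> Suc m \<and> Suc m \<le> run_end w i)" "w ! Suc m = ToLeft"
    using nth_lean_right[of "Suc m" w i] by (auto split: if_splits)
  moreover have "\<not> (w ! m = ToRight \<and> w ! Suc m = ToLeft)"
    using assms(1) m unfolding admissible_def by simp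
  ultimately have "m = run_end w i"
    using clash m nth_lean_right[of m w i] by (auto split: if_splits)
  with \<open>w ! Suc m = ToLeft\<close> m show False
    using run_end_props(4)[OF assms(2)] by simp
qed

lemma rung_used_lean_left:
  assumes "w ! i \<noteq> ToRight" "i < length w" "j \<le> length w" "rung_used (lean_left w i) j"
  shows "rung_used w j"
proof -
  let ?w' = "lean_left w i"
  from assms(3,4) have left': "\<not> (j < length w \<and> ?w' ! j = ToLeft)"
    and right': "\<not> (0 < j \<and> ?w' ! (j - 1) = ToRight)"
    unfolding rung_used_def by auto
  have "\<not> (j < length w \<and> w ! j = ToLeft)"
    using left' nth_lean_left[of j w i] by (auto split: if_splits)
  moreover have "\<not> (0 < j \<and> w ! (j - 1) = ToRight)"
  proof
    assume right: "0 < j \<and> w ! (j - 1) = ToRight"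
    with assms(3) right' nth_lean_left[of "j - 1" w i] have "run_start w i \<le> j - 1" "j - 1 \<le> i"
      by (auto split: if_splits)
    moreover have "j - 1 \<noteq> i"
      using right assms(1) by auto
    ultimately have "?w' ! j = ToLeft" "j < length w"
      using assms(2) nth_lean_left[of j w i] by auto
    with left' show False
      by simp
  qed
  ultimately show ?thesis
    using assms(3) unfolding rung_used_def by blast
qed

lemma rung_used_lean_right:
  assumes "w ! i \<noteq> ToLeft" "j \<le> length w" "rung_used (lean_right w i) j"
  shows "rung_used w j"
proof -
  let ?w' = "lean_right w i"
  from assms(2,3) have left': "\<not> (j < length w \<and> ?w' ! j = ToLeft)"
    and right': "\<not> (0 < j \<and> ?w' ! (j - 1) = ToRight)"
    unfolding rung_used_def by auto
  have "\<not> (0 < j \<and> w ! (j - 1) = ToRight)"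
    using assms(2) right' nth_lean_right[of "j - 1" w i] by (auto split: if_splits)
  moreover have "\<not> (j < length w \<and> w ! j = ToLeft)"
  proof
    assume left: "j < length w \<and> w ! j = ToLeft"
    with left' nth_lean_right[of j w i] have "i \<le> j" "j \<le> run_end w i"
      by (auto split: if_splits)
    moreover have "j \<noteq> i"
      using left assms(1) by auto
    ultimately have "?w' ! (j - 1) = ToRight" "0 < j"
      using left nth_lean_right[of "j - 1" w i] by auto
    with right' show False
      by simp
  qed
  ultimately show ?thesis
    using assms(2) unfolding rung_used_def by blast
qed

lemma is_alternative_Middle_left:
  assumes adm: "admissible w" and i: "i < length w" and flat: "w ! i = Flat True True"
  shows "is_alternative w (Middle i) (lean_left w i)"
proof -
  let ?k = "run_start w i"
  have "lean_left w i \<noteq> w"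
    using i flat nth_lean_left[of i w i] run_start_le[of w i] by auto
  moreover have "edge_owner w j l = Middle i"
    if "j < length w" "l \<in> state_edges (lean_left w i ! j) - state_edges (w ! j)" for j l
  proof -
    have j: "?k \<le> j" "j \<le> i"
      using that nth_lean_left[of j w i] by (auto split: if_splits)
    with that have l: "l \<in> state_edges ToLeft - state_edges (w ! j)"
      using nth_lean_left[of j w i] by simp
    show ?thesis
    proof (cases "j = i")
      case True
      with l flat show ?thesis
        by (auto simp: edge_owner_def fragment_matching_def upper_edges_def lower_edges_def)
    next
      case False
      have "w ! p = ToRight" if "j \<le> p" "p < i" for p
        using that j(1) by (intro run_start_ToRight) simp_all
      with False j flat have "w ! j = ToRight" "next_flat w j = i"
        by (auto intro!: next_flat_eqI)
      with l show ?thesis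
        by (auto simp: edge_owner_def fragment_matching_def)
    qed
  qed
  ultimately show ?thesis
    unfolding is_alternative_def using admissible_lean_left[OF adm] rung_used_lean_left[of w i] flat i
    by auto
qed

lemma is_alternative_Middle_right:
  assumes adm: "admissible w" and i: "i < length w" and flat: "w ! i = Flat False False"
  shows "is_alternative w (Middle i) (lean_right w i)"
proof -
  let ?K = "run_end w i"
  have "lean_right w i \<noteq> w"
    using i flat nth_lean_right[of i w i] run_end_props(1)[OF i] by auto
  moreover have "edge_owner w j l = Middle i"
    if "j < length w" "l \<in> state_edges (lean_right w i ! j) - state_edges (w ! j)" for j l
  proof -
    have j: "i \<le> j" "j \<le> ?K"
      using that nth_lean_right[of j w i] by (auto split: if_splits)
    with that have l: "l \<in> state_edges ToRight - state_edges (w ! j)"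
      using nth_lean_right[of j w i] by simp
    show ?thesis
    proof (cases "j = i")
      case True
      with l flat show ?thesis
        by (auto simp: edge_owner_def fragment_matching_def upper_edges_def lower_edges_def)
    next
      case False
      with j have "w ! j = ToLeft" "prev_flat w j = i"
        using run_end_props(3)[OF i] flat by (auto intro!: prev_flat_eqI)
      with l show ?thesis
        by (auto simp: edge_owner_def fragment_matching_def)
    qed
  qed
  ultimately show ?thesis
    unfolding is_alternative_def using admissible_lean_right[OF adm i] rung_used_lean_right[of w i] flat
    by auto
qed

lemma exists_alternative:
  assumes adm: "admissible w" and c: "c \<in> cycles w"
  shows "\<exists>w'. is_alternative w c w'"
proof -
  obtain i where i: "i < length w" "c \<in> fragment_cycles i (w ! i)"
    using c unfolding cycles_def by blast
  show ?thesis
  proof (cases "w ! i")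
    case (Flat a b)
    with i(2) consider "c = Upper i" | "c = Lower i" | "c = Middle i" "a = b"
      by (auto split: if_splits)
    then show ?thesis
    proof cases
      case 1
      then show ?thesis
        using is_alternative_Upper[OF adm i(1) Flat] by blast
    next
      case 2
      then show ?thesis
        using is_alternative_Lower[OF adm i(1) Flat] by blast
    next
      case 3
      then show ?thesis
        using is_alternative_Middle_left[OF adm i(1)] is_alternative_Middle_right[OF adm i(1)] Flat
        by (cases a) auto
    qed
  next
    case ToLeft
    with i(2) show ?thesis
      using is_alternative_Swap_ToLeft[OF adm i(1)] by auto
  next
    case ToRight
    with i(2) show ?thesis
      using is_alternative_Swap_ToRight[OF adm i(1)] by auto
  qed
qed

lemma anti_forcing_number_matching_of:
  assumes adm: "admissible w"
  shows "anti_forcing_number (chain_vertices (length w)) (chain_edges (length w)) (matching_of w) = cost w"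
proof (rule anti_forcing_number_eqI)
  show "anti_forcing_set (chain_vertices (length w)) (chain_edges (length w)) (matching_of w) (anti_forcing_edges w)"
    using adm by (rule anti_forcing_set_anti_forcing_edges)
  show "finite (anti_forcing_edges w)" "card (anti_forcing_edges w) = cost w"
    using adm by (simp_all add: finite_anti_forcing_edges card_anti_forcing_edges)
next
  fix S assume S: "anti_forcing_set (chain_vertices (length w)) (chain_edges (length w)) (matching_of w) S"
    "finite S"
  obtain alt where alt: "\<And>c. c \<in> cycles w \<Longrightarrow> is_alternative w c (alt c)"
    using exists_alternative[OF adm] by metis
  have "card (cycles w) \<le> card S"
  proof (rule anti_forcing_set_card_ge[OF S, where P = "\<lambda>c. matching_of (alt c)"])
    fix c assume "c \<in> cycles w"
    then have "admissible (alt c)" "length (alt c) = length w" "alt c \<noteq> w"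
      using alt unfolding is_alternative_def by auto
    then show "perfect_matching (chain_vertices (length w)) (chain_edges (length w)) (matching_of (alt c))"
      "matching_of (alt c) \<noteq> matching_of w"
      using matching_of_perfect word_of_matching_of by metis+
  next
    show "disjoint_family_on (\<lambda>c. matching_of (alt c) - matching_of w) (cycles w)"
      unfolding disjoint_family_on_def using alt new_edges_disjoint by blast
  qed
  then show "cost w \<le> card S"
    by (simp add: card_cycles)
qed

lemma anti_forcing_poly_chain:
  "anti_forcing_poly (chain_vertices n) (chain_edges n) = (\<Sum>w\<in>words n. monom 1 (cost w))"
  unfolding anti_forcing_poly_def perfect_matchings_chain
  by (subst sum.reindex[OF inj_on_matching_of])
    (auto intro!: sum.cong simp: words_def anti_forcing_number_matching_of)

section \<open>The anti-forcing polynomial\<close>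

lemma UNIV_state: "(UNIV :: state set) = {Flat True True, Flat True False, Flat False True, Flat False False, ToLeft, ToRight}"
  by (rule set_eqI, case_tac x) auto

lemma finite_words: "finite (words n)"
proof (rule finite_subset)
  show "words n \<subseteq> {w. set w \<subseteq> UNIV \<and> length w = n}"
    unfolding words_def by auto
  show "finite {w. set w \<subseteq> (UNIV :: state set) \<and> length w = n}"
    by (rule finite_lists_length_eq) (simp add: UNIV_state)
qed

lemma admissible_Cons: "admissible (s # w) \<longleftrightarrow> admissible w \<and> \<not> (s = ToRight \<and> w \<noteq> [] \<and> hd w = ToLeft)"
proof -
  have "(\<forall>i. Suc i < length (s # w) \<longrightarrow> P i) \<longleftrightarrow> (w \<noteq> [] \<longrightarrow> P 0) \<and> (\<forall>i. Suc i < length w \<longrightarrow> P (Suc i))"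
    for P :: "nat \<Rightarrow> bool"
  proof (intro iffI conjI allI impI)
    fix i assume "(w \<noteq> [] \<longrightarrow> P 0) \<and> (\<forall>i. Suc i < length w \<longrightarrow> P (Suc i))" "Suc i < length (s # w)"
    then show "P i"
      by (cases i) auto
  qed auto
  from this[of "\<lambda>i. \<not> ((s # w) ! i = ToRight \<and> (s # w) ! Suc i = ToLeft)"] show ?thesis
    unfolding admissible_def by (auto simp: hd_conv_nth)
qed

definition words_poly :: "nat \<Rightarrow> state set \<Rightarrow> int poly" where
  "words_poly n C = (\<Sum>w\<in>{w \<in> words n. w = [] \<or> hd w \<in> C}. monom 1 (cost w))"

lemma words_poly_0: "words_poly 0 C = 1"
proof -
  have "{w \<in> words 0. w = [] \<or> hd w \<in> C} = {[]}"
    by (auto simp: words_def admissible_def)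
  then show ?thesis
    unfolding words_poly_def by (simp add: cost_def)
qed

lemma words_poly_Suc:
  "words_poly (Suc n) C =
    (\<Sum>s\<in>C. monom 1 (state_cost s) * words_poly n (if s = ToRight then - {ToLeft} else UNIV))"
proof -
  let ?tail = "\<lambda>s. {w \<in> words n. w = [] \<or> hd w \<in> (if s = ToRight then - {ToLeft} else UNIV)}"
  have split: "{w \<in> words (Suc n). w = [] \<or> hd w \<in> C} = (\<lambda>(s, w). s # w) ` Sigma C ?tail"
  proof (rule set_eqI, rule iffI)
    fix w assume "w \<in> {w \<in> words (Suc n). w = [] \<or> hd w \<in> C}"
    then obtain s w' where "w = s # w'" "s \<in> C" "w' \<in> ?tail s"
      by (cases w) (auto simp: words_def admissible_Cons)
    then show "w \<in> (\<lambda>(s, w). s # w) ` Sigma C ?tail"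
      by force
  qed (auto simp: words_def admissible_Cons)
  have "inj_on (\<lambda>(s, w). s # w) (Sigma C ?tail)"
    by (rule inj_onI) auto
  then have "words_poly (Suc n) C = (\<Sum>(s, w)\<in>Sigma C ?tail. monom 1 (cost (s # w)))"
    unfolding words_poly_def split by (subst sum.reindex) (auto simp: case_prod_beta)
  also have "\<dots> = (\<Sum>s\<in>C. \<Sum>w\<in>?tail s. monom 1 (state_cost s) * monom 1 (cost w))"
    by (subst sum.Sigma[symmetric])
      (auto simp: finite_subset[OF subset_UNIV] UNIV_state finite_words cost_def mult_monom)
  finally show ?thesis
    by (simp add: words_poly_def sum_distrib_left)
qed

definition X :: "int poly" where
  "X = [:0, 1:]"

lemma monom_1_eq_X_power: "monom 1 k = X ^ k"
  by (simp add: X_def monom_altdef)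

lemma words_poly_Suc_UNIV:
  "words_poly (Suc n) UNIV = (2 * X^3 + 2 * X^2 + X) * words_poly n UNIV + X * words_poly n (- {ToLeft})"
  unfolding words_poly_Suc UNIV_state by (simp add: monom_1_eq_X_power algebra_simps)

lemma words_poly_Suc_not_ToLeft:
  "words_poly (Suc n) (- {ToLeft}) = (2 * X^3 + 2 * X^2) * words_poly n UNIV + X * words_poly n (- {ToLeft})"
proof -
  have "- {ToLeft} = {Flat True True, Flat True False, Flat False True, Flat False False, ToRight}"
    using UNIV_state by auto
  then show ?thesis
    unfolding words_poly_Suc by (simp add: monom_1_eq_X_power algebra_simps)
qed

lemma words_poly_eq_lucas_U: "words_poly n UNIV = lucas_U (2 * X * (1 + X + X^2)) (X^2) n"
proof (rule lucas_U_unique)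
  show "words_poly 0 UNIV = 1"
    by (rule words_poly_0)
  show "words_poly (Suc 0) UNIV = 2 * X * (1 + X + X^2)"
    unfolding words_poly_Suc_UNIV words_poly_0 by algebra
  fix n
  have "words_poly (Suc n) (- {ToLeft}) = words_poly (Suc n) UNIV - X * words_poly n UNIV"
    using words_poly_Suc_UNIV[of n] words_poly_Suc_not_ToLeft[of n] by (simp add: algebra_simps)
  then show "words_poly (Suc (Suc n)) UNIV =
      2 * X * (1 + X + X^2) * words_poly (Suc n) UNIV - X^2 * words_poly n UNIV"
    unfolding words_poly_Suc_UNIV[of "Suc n"] by algebra
qed

lemma lucas_U_pyrene:
  "lucas_U (2 * X * (1 + X + X^2)) (X^2) n =
    X^n * (\<Sum>i = (n + 1) div 2..n. of_int ((-1)^(n - i) * 2^(2*i - n) * int (i choose (2*i - n)))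
      * (1 + X + X^2)^(2*i - n))"
proof -
  let ?Q = "1 + X + X^2"
  have "(-1)^(n - i) * of_nat (i choose (2*i - n)) * (2 * X * ?Q)^(2*i - n) * (X^2)^(n - i) =
      X^n * (of_int ((-1)^(n - i) * 2^(2*i - n) * int (i choose (2*i - n))) * ?Q^(2*i - n))"
    if "i \<in> {(n + 1) div 2..n}" for i
  proof -
    have "(2 * X * ?Q)^(2*i - n) * (X^2)^(n - i) = 2^(2*i - n) * ?Q^(2*i - n) * (X^(2*i - n) * (X^2)^(n - i))"
      by (simp only: power_mult_distrib mult_ac)
    also have "X^(2*i - n) * (X^2)^(n - i) = X^n"
      using that by (simp flip: power_add power_mult) (rule arg_cong[where f = "power X"], auto)
    finally have "(2 * X * ?Q)^(2*i - n) * (X^2)^(n - i) = 2^(2*i - n) * ?Q^(2*i - n) * X^n" .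
    then have "(-1)^(n - i) * of_nat (i choose (2*i - n)) * (2 * X * ?Q)^(2*i - n) * (X^2)^(n - i) =
        (-1)^(n - i) * of_nat (i choose (2*i - n)) * (2^(2*i - n) * ?Q^(2*i - n) * X^n)"
      by (simp only: mult.assoc)
    then show ?thesis
      by (simp add: mult_ac)
  qed
  then show ?thesis
    unfolding lucas_U_reversed sum_distrib_left by (rule sum.cong[OF refl])
qed

lemma smult_monom_1: "smult c (monom 1 l) = of_int c * X^l"
  by (simp add: monom_1_eq_X_power of_int_poly)

lemma theorem4p2_rhs_eq:
  "monom 1 n * (\<Sum>l = 0..2*n. \<Sum>i = (l + 2*n + 3) div 4..n. \<Sum>j = (l + 1) div 2..l.
       smult ((-1) ^ (n - i) * 2 ^ (2*i - n) * int (i choose (2*i - n))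
              * int ((2*i - n) choose j) * int (j choose (l - j))) (monom 1 l))
   = X^n * (\<Sum>i = (n + 1) div 2..n. of_int ((-1)^(n - i) * 2^(2*i - n) * int (i choose (2*i - n)))
      * (1 + X + X^2)^(2*i - n))"
proof -
  define c where "c i = (-1)^(n - i) * 2^(2*i - n) * int (i choose (2*i - n))" for i
  define F where "F i l j = of_int (c i) * (of_nat (((2*i - n) choose j) * (j choose (l - j))) * X^l)" for i l j
  have summand: "smult ((-1) ^ (n - i) * 2 ^ (2*i - n) * int (i choose (2*i - n))
      * int ((2*i - n) choose j) * int (j choose (l - j))) (monom 1 l) = F i l j" for i l j
    unfolding smult_monom_1 F_def c_def by simp
  have vanish: "(\<Sum>j = (l + 1) div 2..l. F i l j) = 0" if "n \<le> 2*i" "i < (l + 2*n + 3) div 4" for i l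
  proof (rule sum.neutral, rule ballI)
    fix j assume "j \<in> {(l + 1) div 2..l}"
    with that have "2*i - n < j \<or> j < l - j"
      by auto
    then show "F i l j = 0"
      unfolding F_def by (auto simp: binomial_eq_0)
  qed
  have "(\<Sum>l = 0..2*n. \<Sum>i = (l + 2*n + 3) div 4..n. \<Sum>j = (l + 1) div 2..l. F i l j)
      = (\<Sum>l = 0..2*n. \<Sum>i = (n + 1) div 2..n. \<Sum>j = (l + 1) div 2..l. F i l j)"
  proof (rule sum.cong[OF refl], rule sum.mono_neutral_left)
    fix l
    show "{(l + 2*n + 3) div 4..n} \<subseteq> {(n + 1) div 2..n}"
      by auto
    show "\<forall>i\<in>{(n + 1) div 2..n} - {(l + 2*n + 3) div 4..n}. (\<Sum>j = (l + 1) div 2..l. F i l j) = 0"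
      using vanish by auto
  qed simp
  also have "\<dots> = (\<Sum>i = (n + 1) div 2..n. \<Sum>l = 0..2*n. \<Sum>j = (l + 1) div 2..l. F i l j)"
    by (rule sum.swap)
  also have "\<dots> = (\<Sum>i = (n + 1) div 2..n. of_int (c i) * (1 + X + X^2)^(2*i - n))"
  proof (rule sum.cong[OF refl])
    fix i assume "i \<in> {(n + 1) div 2..n}"
    then have "2*i - n \<le> n"
      by auto
    then show "(\<Sum>l = 0..2*n. \<Sum>j = (l + 1) div 2..l. F i l j) = of_int (c i) * (1 + X + X^2)^(2*i - n)"
      unfolding F_def by (simp only: power_trinomial sum_distrib_left)
  qed
  finally show ?thesis
    unfolding summand c_def by (simp add: monom_1_eq_X_power)
qed

theorem theorem4p2:
  fixes n :: nat
  shows "anti_forcing_poly (pyrene_vertices n) (pyrene_edges n) =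
    monom 1 n * (\<Sum>l = 0..2*n. \<Sum>i = (l + 2*n + 3) div 4..n. \<Sum>j = (l + 1) div 2..l.
       smult ((-1) ^ (n - i) * 2 ^ (2*i - n) * int (i choose (2*i - n))
              * int ((2*i - n) choose j) * int (j choose (l - j))) (monom 1 l))"
proof (cases "n = 0")
  case True
  then show ?thesis
    by (simp add: pyrene_vertices_def pyrene_edges_def pyrene_hexagons_def anti_forcing_poly_empty)
next
  case False
  then have "n \<ge> 1"
    by simp
  have "anti_forcing_poly (pyrene_vertices n) (pyrene_edges n) = anti_forcing_poly (chain_vertices n) (chain_edges n)"
    unfolding pyrene_vertices_eq[OF \<open>n \<ge> 1\<close>] pyrene_edges_eq[OF \<open>n \<ge> 1\<close>]
    by (rule anti_forcing_poly_image[OF inj_pos])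
  also have "\<dots> = words_poly n UNIV"
    by (simp add: anti_forcing_poly_chain words_poly_def)
  also have "\<dots> = lucas_U (2 * X * (1 + X + X^2)) (X^2) n"
    by (rule words_poly_eq_lucas_U)
  finally show ?thesis
    unfolding lucas_U_pyrene theorem4p2_rhs_eq .
qed

end
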